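(* Let $\mathcal{A}$ be a blind $k$-counter automaton with $n\ge 1$ states. Then for every $u\in L(\mathcal{A})$ there is an ideal $I$ given by an ideal expression of length at most $(5n)^{7(k+1)^2}$ such that $u\in I\subseteq \downarrow L(\mathcal{A})$. Consequently, $\downarrow L(\mathcal{A})$ is a finite union of ideals each of which has an expression of length at most $(5n)^{7(k+1)^2}$.
   Context: A blind $k$-counter automaton is a tuple $\mathcal{A}=(Q,X,q_0,\Delta,Q_f)$ with $\Delta\subseteq Q\times(X\cup\{\varepsilon\})\times\{-1,0,1\}^k\times Q$ finite; a walk is a sequence of transitions whose consecutive states match, its effect is the sum of its vectors and its input the concatenation of its letters; it is accepting if it starts in $q_0$, ends in $Q_f$ and has effect $0$, and $L(\mathcal{A})$ is the set of inputs of accepting walks. $\downarrow L$ is the set of all (not necessarily contiguous) subwords of words in $L$. An ideal expression is a finite product of factors, each of the form $Y^*$ with $Y\subseteq X$ or $\{x,\varepsilon\}$ with $x\in X\cup\{\varepsilon\}$; its length is its number of factors, and the language it denotes is called an ideal. *)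

theory Defs
  imports Main "HOL-Library.Sublist"
begin

text \<open>A transition (p, a, v, q): source p, letter a (None = epsilon), counter update v
  (an int list of length k with entries in {-1,0,1}), target q.\<close>
type_synonym ('q, 'x) trans = "'q \<times> 'x option \<times> int list \<times> 'q"

definition src :: "('q, 'x) trans \<Rightarrow> 'q" where "src t = fst t"
definition lbl :: "('q, 'x) trans \<Rightarrow> 'x option" where "lbl t = fst (snd t)"
definition upd :: "('q, 'x) trans \<Rightarrow> int list" where "upd t = fst (snd (snd t))"
definition tgt :: "('q, 'x) trans \<Rightarrow> 'q" where "tgt t = snd (snd (snd t))"

definition blind_counter_automaton ::
  "nat \<Rightarrow> 'q set \<Rightarrow> 'x set \<Rightarrow> 'q \<Rightarrow> ('q, 'x) trans set \<Rightarrow> 'q set \<Rightarrow> bool" where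
  "blind_counter_automaton k Q X q0 \<Delta> Qf \<longleftrightarrow>
     finite Q \<and> finite X \<and> q0 \<in> Q \<and> Qf \<subseteq> Q \<and> finite \<Delta> \<and>
     (\<forall>t\<in>\<Delta>. src t \<in> Q \<and> tgt t \<in> Q \<and> set_option (lbl t) \<subseteq> X \<and>
        length (upd t) = k \<and> set (upd t) \<subseteq> {-1, 0, 1})"

definition is_walk :: "('q, 'x) trans set \<Rightarrow> ('q, 'x) trans list \<Rightarrow> bool" where
  "is_walk \<Delta> w \<longleftrightarrow> set w \<subseteq> \<Delta> \<and> (\<forall>i. Suc i < length w \<longrightarrow> tgt (w ! i) = src (w ! Suc i))"

definition effect :: "nat \<Rightarrow> ('q, 'x) trans list \<Rightarrow> int list" where
  "effect k w = map (\<lambda>i. \<Sum>t\<leftarrow>w. upd t ! i) [0..<k]"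

definition walk_input :: "('q, 'x) trans list \<Rightarrow> 'x list" where
  "walk_input w = concat (map (\<lambda>t. case lbl t of None \<Rightarrow> [] | Some a \<Rightarrow> [a]) w)"

definition accepting :: "nat \<Rightarrow> 'q \<Rightarrow> ('q, 'x) trans set \<Rightarrow> 'q set \<Rightarrow> ('q, 'x) trans list \<Rightarrow> bool" where
  "accepting k q0 \<Delta> Qf w \<longleftrightarrow> is_walk \<Delta> w \<and> effect k w = replicate k 0 \<and>
     (if w = [] then q0 \<in> Qf else src (hd w) = q0 \<and> tgt (last w) \<in> Qf)"

definition bca_lang :: "nat \<Rightarrow> 'q \<Rightarrow> ('q, 'x) trans set \<Rightarrow> 'q set \<Rightarrow> 'x list set" where
  "bca_lang k q0 \<Delta> Qf = {walk_input w | w. accepting k q0 \<Delta> Qf w}"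

definition down_closure :: "'x list set \<Rightarrow> 'x list set" where
  "down_closure L = {u. \<exists>v\<in>L. subseq u v}"

datatype 'x factor = Star "'x set" | Opt "'x option"

definition conc :: "'x list set \<Rightarrow> 'x list set \<Rightarrow> 'x list set" where
  "conc A B = {u @ v | u v. u \<in> A \<and> v \<in> B}"

fun factor_lang :: "'x factor \<Rightarrow> 'x list set" where
  "factor_lang (Star Y) = lists Y"
| "factor_lang (Opt None) = {[]}"
| "factor_lang (Opt (Some x)) = {[x], []}"

fun ideal_lang :: "'x factor list \<Rightarrow> 'x list set" where
  "ideal_lang [] = {[]}"
| "ideal_lang (f # fs) = conc (factor_lang f) (ideal_lang fs)"

fun factor_over :: "'x set \<Rightarrow> 'x factor \<Rightarrow> bool" where
  "factor_over X (Star Y) \<longleftrightarrow> Y \<subseteq> X"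
| "factor_over X (Opt a) \<longleftrightarrow> set_option a \<subseteq> X"

definition ideal_expr :: "'x set \<Rightarrow> 'x factor list \<Rightarrow> bool" where
  "ideal_expr X e \<longleftrightarrow> (\<forall>f\<in>set e. factor_over X f)"

end

theory Submission
  imports Defs Complex_Main "HOL-Library.Multiset" "HOL-Library.Function_Algebras"
begin

text \<open>
  An accepting walk decomposes into a path of length below \<open>n\<close> and a multiset of cycles of
  length at most \<open>n\<close>. Split the cycles into a part \<open>F\<close> of total effect zero and a zero-sum-free
  remainder \<open>L\<close>. The effect of \<open>L\<close> is minus the effect of the short path, so a Steinitz-type
  argument bounds the size of \<open>L\<close> by \<open>(2kn + 1)^k\<close>. Splicing cycles of \<open>F\<close> that share a state
  yields cycles with pairwise disjoint state sets. Reading the walk from left to right, every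
  maximal run of transitions lying on one such cycle \<open>g\<close> becomes the factor \<open>Y\<^sup>*\<close> for the letters
  \<open>Y\<close> of \<open>g\<close>, and every other transition becomes an optional letter; only the transitions of the
  short path and of \<open>L\<close> cost factors, which gives the length bound. Each word of the resulting
  ideal is a subword of an accepting walk obtained by inserting copies of the cycles of \<open>F\<close>, padded
  so that every cycle is inserted equally often and the effect stays zero.
\<close>

section \<open>A Steinitz lemma\<close>

lemma dependence_insert:
  fixes u :: "'i \<Rightarrow> 'c \<Rightarrow> 'a::comm_ring"
  assumes fin: "finite S" and i0: "i0 \<notin> S"
    and dep: "(\<Sum>i\<in>S. z i * (u i c - a i * u i0 c)) = 0"
  shows "(\<Sum>i\<in>insert i0 S. (if i = i0 then - (\<Sum>j\<in>S. z j * a j) else z i) * u i c) = 0"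
proof -
  have "(\<Sum>i\<in>S. (if i = i0 then - (\<Sum>j\<in>S. z j * a j) else z i) * u i c) = (\<Sum>i\<in>S. z i * u i c)"
    using i0 by (intro sum.cong) auto
  then have "(\<Sum>i\<in>insert i0 S. (if i = i0 then - (\<Sum>j\<in>S. z j * a j) else z i) * u i c) =
      (\<Sum>i\<in>S. z i * u i c) - (\<Sum>j\<in>S. z j * a j * u i0 c)"
    using fin i0 by (simp add: sum_distrib_right)
  also have "\<dots> = (\<Sum>i\<in>S. z i * (u i c - a i * u i0 c))"
    by (simp add: sum_subtractf[symmetric] algebra_simps)
  finally show ?thesis using dep by simp
qed

lemma nontrivial_linear_dependence:
  fixes u :: "'i \<Rightarrow> nat \<Rightarrow> real"
  shows "finite S \<Longrightarrow> card S > N \<Longrightarrow> (\<forall>i\<in>S. \<forall>c\<ge>N. u i c = 0) \<Longrightarrow>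
    \<exists>z. (\<exists>i\<in>S. z i \<noteq> 0) \<and> (\<forall>c. (\<Sum>i\<in>S. z i * u i c) = 0)"
proof (induction N arbitrary: S u)
  case 0
  then obtain i0 where i0: "i0 \<in> S" by fastforce
  let ?z = "\<lambda>i. if i = i0 then 1 else (0::real)"
  have "(\<Sum>i\<in>S. ?z i * u i c) = 0" for c
  proof -
    have "(\<Sum>i\<in>S. ?z i * u i c) = (\<Sum>i\<in>S. if i = i0 then u i c else 0)"
      by (rule sum.cong) auto
    also have "\<dots> = u i0 c" using i0 0(1) by (simp add: sum.delta)
    also have "\<dots> = 0" using 0(3) i0 by auto
    finally show ?thesis .
  qed
  then show ?case using i0 by (intro exI[of _ ?z]) auto
next
  case (Suc N)
  show ?case
  proof (cases "\<forall>i\<in>S. u i N = 0")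
    case True
    have "\<forall>i\<in>S. \<forall>c\<ge>N. u i c = 0"
      using True Suc.prems(3) by (metis Suc_leI le_eq_less_or_eq)
    then show ?thesis using Suc.IH[of S u] Suc.prems by auto
  next
    case False
    then obtain i0 where i0: "i0 \<in> S" "u i0 N \<noteq> 0" by auto
    define S' where "S' = S - {i0}"
    define u' where "u' = (\<lambda>i c. u i c - (u i N / u i0 N) * u i0 c)"
    have fS': "finite S'" using Suc.prems(1) S'_def by auto
    have cS': "card S' > N" using Suc.prems(1,2) i0 S'_def by auto
    have "\<forall>i\<in>S'. \<forall>c\<ge>N. u' i c = 0"
    proof (intro ballI allI impI)
      fix i c assume i: "i \<in> S'" and c: "N \<le> c"
      show "u' i c = 0"
      proof (cases "c = N")
        case True then show ?thesis using i0 by (simp add: u'_def)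
      next
        case False
        then have "Suc N \<le> c" using c by auto
        then have "u i c = 0" "u i0 c = 0" using Suc.prems(3) i i0 S'_def by auto
        then show ?thesis by (simp add: u'_def)
      qed
    qed
    from Suc.IH[OF fS' cS' this] obtain z' where
      z': "\<exists>i\<in>S'. z' i \<noteq> 0" "\<forall>c. (\<Sum>i\<in>S'. z' i * u' i c) = 0" by blast
    define z where "z = (\<lambda>i. if i = i0 then - (\<Sum>j\<in>S'. z' j * (u j N / u i0 N)) else z' i)"
    have S: "S = insert i0 S'" "i0 \<notin> S'" using i0 S'_def by auto
    have "(\<Sum>i\<in>S. z i * u i c) = 0" for c
      unfolding S(1) z_def by (rule dependence_insert[OF fS' S(2) z'(2)[rule_format, unfolded u'_def]])
    moreover have "\<exists>i\<in>S. z i \<noteq> 0" using z'(1) S by (auto simp: z_def)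
    ultimately show ?thesis by blast
  qed
qed

lemma exists_zero_sum_dependence:
  fixes v :: "nat \<Rightarrow> nat \<Rightarrow> real"
  assumes "finite F" "card F > k + 1" "\<forall>i\<in>F. \<forall>c\<ge>k. v i c = 0"
  shows "\<exists>z. (\<exists>i\<in>F. z i \<noteq> 0) \<and> (\<Sum>i\<in>F. z i) = 0 \<and> (\<forall>c. (\<Sum>i\<in>F. z i * v i c) = 0)"
proof -
  define u where "u = (\<lambda>i c. if c = k then 1 else v i c)"
  have "\<forall>i\<in>F. \<forall>c\<ge>k+1. u i c = 0" using assms(3) by (auto simp: u_def)
  from nontrivial_linear_dependence[OF assms(1,2) this] obtain z where
    z: "\<exists>i\<in>F. z i \<noteq> 0" "\<forall>c. (\<Sum>i\<in>F. z i * u i c) = 0" by blast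
  have "(\<Sum>i\<in>F. z i) = 0" using z(2)[rule_format, of k] by (simp add: u_def)
  moreover have "(\<Sum>i\<in>F. z i * v i c) = 0" for c
  proof (cases "c = k")
    case True
    then have "(\<Sum>i\<in>F. z i * v i c) = (\<Sum>i\<in>F. 0)" using assms(3) by (intro sum.cong) auto
    then show ?thesis by simp
  next
    case False then show ?thesis using z(2)[rule_format, of c] by (simp add: u_def)
  qed
  ultimately show ?thesis using z(1) by blast
qed

text \<open>
  Fractional points of the polytope \<open>{l \<in> [0,1]\<^sup>A. \<Sum>l = r, \<Sum>l\<^sub>i v\<^sub>i = 0}\<close>; a vertex has at most
  \<open>k + 1\<close> coordinates strictly between \<open>0\<close> and \<open>1\<close>.
\<close>
definition fractional_solution ::
  "(nat \<Rightarrow> nat \<Rightarrow> real) \<Rightarrow> nat set \<Rightarrow> real \<Rightarrow> (nat \<Rightarrow> real) \<Rightarrow> bool" where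
  "fractional_solution v A r l \<longleftrightarrow> (\<forall>i\<in>A. 0 \<le> l i \<and> l i \<le> 1) \<and> (\<Sum>i\<in>A. l i) = r \<and>
     (\<forall>c. (\<Sum>i\<in>A. l i * v i c) = 0)"

definition fractional_part :: "nat set \<Rightarrow> (nat \<Rightarrow> real) \<Rightarrow> nat set" where
  "fractional_part A l = {i\<in>A. 0 < l i \<and> l i < 1}"

lemma exists_step_to_boundary:
  fixes l z :: "'i \<Rightarrow> real"
  assumes fin: "finite F" and l: "\<forall>i\<in>F. 0 < l i \<and> l i < 1" and z: "\<exists>i\<in>F. z i \<noteq> 0"
  shows "\<exists>t. (\<forall>i\<in>F. 0 \<le> l i + t * z i \<and> l i + t * z i \<le> 1) \<and>
    (\<exists>i\<in>F. l i + t * z i = 0 \<or> l i + t * z i = 1)"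
proof -
  define P where "P = {i\<in>F. z i > 0}"
  define N where "N = {i\<in>F. z i < 0}"
  define R where "R = (\<lambda>i. (1 - l i) / z i) ` P \<union> (\<lambda>i. l i / (- z i)) ` N"
  have fR: "finite R" using fin by (auto simp: R_def P_def N_def)
  have neR: "R \<noteq> {}" using z by (auto simp: R_def P_def N_def neq_iff)
  define t where "t = Min R"
  have tR: "t \<in> R" using fR neR by (simp add: t_def)
  have tpos: "t > 0" using tR l by (auto simp: R_def P_def N_def divide_pos_neg)
  have tle: "\<And>x. x \<in> R \<Longrightarrow> t \<le> x" using fR by (simp add: t_def)
  have "0 \<le> l i + t * z i \<and> l i + t * z i \<le> 1" if i: "i \<in> F" for i
  proof (cases "z i" "0 :: real" rule: linorder_cases)
    case less
    have "t \<le> l i / (- z i)" using i less by (intro tle) (auto simp: R_def N_def)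
    then have "t * (- z i) \<le> l i" using pos_le_divide_eq[of "- z i"] less by simp
    moreover have "t * z i \<le> 0" using less tpos by (intro mult_nonneg_nonpos) auto
    ultimately show ?thesis using l i by auto
  next
    case greater
    then have "t \<le> (1 - l i) / z i" using i by (intro tle) (auto simp: R_def P_def)
    then have "t * z i \<le> 1 - l i" using greater by (simp add: pos_le_divide_eq)
    moreover have "0 \<le> t * z i" using greater tpos by simp
    ultimately show ?thesis using l i by auto
  qed (use l i in auto)
  moreover have "\<exists>i\<in>F. l i + t * z i = 0 \<or> l i + t * z i = 1"
  proof -
    from tR consider (pos) i where "i \<in> P" "t = (1 - l i) / z i"
      | (neg) i where "i \<in> N" "t = l i / (- z i)"
      by (auto simp: R_def)
    then show ?thesis
    proof cases
      case pos
      then have "l i + t * z i = 1" by (auto simp: P_def)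
      moreover have "i \<in> F" using pos by (simp add: P_def)
      ultimately show ?thesis by blast
    next
      case neg
      then have "l i + t * z i = 0" by (auto simp: N_def)
      moreover have "i \<in> F" using neg by (simp add: N_def)
      ultimately show ?thesis by blast
    qed
  qed
  ultimately show ?thesis by blast
qed

lemma fractional_solution_shift:
  assumes f: "fractional_solution v A r l" and fin: "finite A" and FA: "F \<subseteq> A"
    and zsum: "(\<Sum>i\<in>F. z i) = 0" and zv: "\<forall>c. (\<Sum>i\<in>F. z i * v i c) = 0"
    and bnd: "\<forall>i\<in>F. 0 \<le> l i + z i \<and> l i + z i \<le> 1"
  shows "fractional_solution v A r (\<lambda>i. if i \<in> F then l i + z i else l i)"
proof -
  define m where "m = (\<lambda>i. if i \<in> F then l i + z i else l i)"
  have split: "(\<Sum>i\<in>A. m i * g i) = (\<Sum>i\<in>A. l i * g i) + (\<Sum>i\<in>F. z i * g i)" for g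
  proof -
    have "(\<Sum>i\<in>A. m i * g i) = (\<Sum>i\<in>A. l i * g i + (if i \<in> F then z i * g i else 0))"
      by (intro sum.cong) (auto simp: m_def algebra_simps)
    also have "\<dots> = (\<Sum>i\<in>A. l i * g i) + (\<Sum>i\<in>F. z i * g i)"
      using fin FA by (simp add: sum.distrib sum.If_cases Int_absorb1)
    finally show ?thesis .
  qed
  have "fractional_solution v A r m"
    unfolding fractional_solution_def
  proof (intro conjI ballI allI)
    show "0 \<le> m i" "m i \<le> 1" if "i \<in> A" for i
      using f bnd that by (auto simp: m_def fractional_solution_def)
    show "(\<Sum>i\<in>A. m i) = r" using split[of "\<lambda>_. 1"] zsum f by (simp add: fractional_solution_def)
    show "(\<Sum>i\<in>A. m i * v i c) = 0" for c
      using split[of "\<lambda>i. v i c"] zv f by (simp add: fractional_solution_def)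
  qed
  then show ?thesis by (simp add: m_def)
qed

lemma fractional_part_decrease:
  assumes fin: "finite A" and vk: "\<forall>i\<in>A. \<forall>c\<ge>k. v i c = 0"
    and f: "fractional_solution v A r l" and big: "card (fractional_part A l) > k + 1"
  shows "\<exists>m. fractional_solution v A r m \<and> card (fractional_part A m) < card (fractional_part A l)"
proof -
  define F where "F = fractional_part A l"
  have FA: "F \<subseteq> A" by (auto simp: F_def fractional_part_def)
  have fF: "finite F" using FA fin finite_subset by auto
  have lF: "\<forall>i\<in>F. 0 < l i \<and> l i < 1" by (auto simp: F_def fractional_part_def)
  have "card F > k + 1" "\<forall>i\<in>F. \<forall>c\<ge>k. v i c = 0" using big vk FA by (auto simp: F_def)
  from exists_zero_sum_dependence[OF fF this] obtain z where
    z: "\<exists>i\<in>F. z i \<noteq> 0" "(\<Sum>i\<in>F. z i) = 0" "\<forall>c. (\<Sum>i\<in>F. z i * v i c) = 0"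
    by blast
  from exists_step_to_boundary[OF fF lF z(1)] obtain t where
    t: "\<forall>i\<in>F. 0 \<le> l i + t * z i \<and> l i + t * z i \<le> 1"
       "\<exists>i\<in>F. l i + t * z i = 0 \<or> l i + t * z i = 1" by blast
  define m where "m = (\<lambda>i. if i \<in> F then l i + t * z i else l i)"
  have "fractional_solution v A r m"
    unfolding m_def
  proof (rule fractional_solution_shift[OF f fin FA])
    show "(\<Sum>i\<in>F. t * z i) = 0" using z(2) by (simp add: sum_distrib_left[symmetric])
    show "\<forall>c. (\<Sum>i\<in>F. t * z i * v i c) = 0"
      using z(3) by (simp add: mult.assoc sum_distrib_left[symmetric])
  qed (use t(1) in auto)
  moreover have "fractional_part A m \<subset> F"
  proof -
    have "fractional_part A m \<subseteq> F" by (auto simp: fractional_part_def F_def m_def)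
    moreover obtain i where "i \<in> F" "i \<notin> fractional_part A m"
      using t(2) by (auto simp: fractional_part_def m_def)
    ultimately show ?thesis by blast
  qed
  then have "card (fractional_part A m) < card F" by (rule psubset_card_mono[OF fF])
  ultimately show ?thesis by (auto simp: F_def)
qed

lemma exists_solution_small_fractional_part:
  assumes fin: "finite A" and vk: "\<forall>i\<in>A. \<forall>c\<ge>k. v i c = 0" and f: "fractional_solution v A r l"
  shows "\<exists>m. fractional_solution v A r m \<and> card (fractional_part A m) \<le> k + 1"
  using f
proof (induction "card (fractional_part A l)" arbitrary: l rule: less_induct)
  case less
  show ?case
  proof (cases "card (fractional_part A l) \<le> k + 1")
    case True then show ?thesis using less.prems by blast
  next
    case False
    from fractional_part_decrease[OF fin vk less.prems] False obtain m where
      "fractional_solution v A r m" "card (fractional_part A m) < card (fractional_part A l)" by auto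
    then show ?thesis using less.hyps by blast
  qed
qed

lemma abs_sum_list_le:
  fixes f :: "'a \<Rightarrow> real"
  assumes "\<forall>y\<in>set ys. \<bar>f y\<bar> \<le> D"
  shows "\<bar>(\<Sum>y\<leftarrow>ys. f y)\<bar> \<le> real (length ys) * D"
  using assms
proof (induction ys)
  case Nil then show ?case by simp
next
  case (Cons a ys)
  have "\<bar>(\<Sum>y\<leftarrow>a#ys. f y)\<bar> \<le> \<bar>f a\<bar> + \<bar>(\<Sum>y\<leftarrow>ys. f y)\<bar>" by (simp add: abs_triangle_ineq)
  also have "\<dots> \<le> D + real (length ys) * D" using Cons by (intro add_mono) auto
  finally show ?case by (simp add: algebra_simps)
qed

lemma abs_sum_list_take_le:
  fixes v :: "'i \<Rightarrow> real"
  assumes "\<forall>i\<in>set xs. \<bar>v i\<bar> \<le> D" "length xs \<le> k" "0 \<le> D"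
  shows "\<bar>\<Sum>i\<leftarrow>take L xs. v i\<bar> \<le> real k * D"
proof -
  have "\<bar>\<Sum>i\<leftarrow>take L xs. v i\<bar> \<le> real (length (take L xs)) * D"
    using assms(1) by (intro abs_sum_list_le) (auto dest: in_set_takeD)
  also have "\<dots> \<le> real k * D" using assms(2,3) by (intro mult_right_mono) auto
  finally show ?thesis .
qed

lemma fractional_solution_scale:
  assumes "fractional_solution v A r l" "0 \<le> q" "q \<le> 1"
  shows "fractional_solution v A (r * q) (\<lambda>i. l i * q)"
  using assms
  by (auto simp: fractional_solution_def mult_le_one sum_distrib_right mult.commute mult.left_commute
      sum_distrib_left[symmetric])

lemma fractional_solution_remove:
  assumes "fractional_solution v A r m" "finite A" "m i = 0"
  shows "fractional_solution v (A - {i}) r m"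
proof (cases "i \<in> A")
  case True
  then have "(\<Sum>j\<in>A. m j * g j) = (\<Sum>j\<in>A - {i}. m j * g j)" for g
    using assms(2,3) by (simp add: sum.remove)
  from this[of "\<lambda>_. 1"] this[of "\<lambda>j. v j _"] show ?thesis
    using assms(1) by (auto simp: fractional_solution_def)
qed (use assms(1) in simp)

lemma fractional_solution_has_zero:
  assumes fin: "finite A" and cA: "card A = Suc j" and jk: "k \<le> j"
    and m: "fractional_solution v A (real j - real k) m"
    and few: "card (fractional_part A m) \<le> k + 1"
  shows "\<exists>i\<in>A. m i = 0"
proof (rule ccontr)
  assume "\<not> ?thesis"
  then have pos: "\<forall>i\<in>A. 0 < m i" using m by (force simp: fractional_solution_def)
  define F where "F = fractional_part A m"
  define Ones where "Ones = {i\<in>A. m i = 1}"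
  have AU: "A = F \<union> Ones" "F \<inter> Ones = {}"
    using pos m by (auto simp: F_def Ones_def fractional_part_def fractional_solution_def)
  have fF: "finite F" "finite Ones" using fin AU by (metis finite_Un)+
  have cA': "card F + card Ones = Suc j" using AU fF cA card_Un_disjoint by metis
  have "(\<Sum>i\<in>Ones. m i) = real (card Ones)" by (simp add: Ones_def)
  then have "(\<Sum>i\<in>A. m i) = (\<Sum>i\<in>F. m i) + real (card Ones)"
    using AU fF by (simp add: sum.union_disjoint)
  then have eq: "real j - real k = (\<Sum>i\<in>F. m i) + real (card Ones)"
    using m by (simp add: fractional_solution_def)
  show False
  proof (cases "F = {}")
    case True
    then show ?thesis using eq cA' by simp
  next
    case False
    \<comment> \<open>at least \<open>j - k\<close> coordinates equal \<open>1\<close>, which leaves no mass for the fractional ones\<close>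
    have "(\<Sum>i\<in>F. m i) > 0" using False fF pos AU by (intro sum_pos) auto
    moreover have "card Ones \<ge> j - k" using cA' few by (simp add: F_def)
    ultimately show ?thesis using eq jk by linarith
  qed
qed

lemma abs_sum_le_of_fractional_solution:
  assumes fin: "finite A" and l: "fractional_solution v A (real (card A) - real k) l"
    and vD: "\<forall>i\<in>A. \<forall>c. \<bar>v i c\<bar> \<le> D"
  shows "\<bar>\<Sum>i\<in>A. v i c\<bar> \<le> real k * D"
proof -
  note fl = l[unfolded fractional_solution_def]
  have "(\<Sum>i\<in>A. v i c) = (\<Sum>i\<in>A. v i c) - (\<Sum>i\<in>A. l i * v i c)" using fl by simp
  also have "\<dots> = (\<Sum>i\<in>A. (1 - l i) * v i c)" by (simp add: sum_subtractf[symmetric] algebra_simps)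
  finally have "\<bar>\<Sum>i\<in>A. v i c\<bar> \<le> (\<Sum>i\<in>A. \<bar>(1 - l i) * v i c\<bar>)"
    by (metis sum_abs)
  also have "\<dots> \<le> (\<Sum>i\<in>A. (1 - l i) * D)"
    using fl vD by (intro sum_mono) (auto simp: abs_mult intro: mult_left_mono)
  also have "\<dots> = real k * D"
    using fl by (simp add: sum_distrib_right[symmetric] sum_subtractf)
  finally show ?thesis .
qed

text \<open>
  Scaling a solution of mass \<open>j + 1 - k\<close> down to mass \<open>j - k\<close> and passing to a vertex frees a
  coordinate with weight \<open>0\<close>; that element is placed last, and the full sum is bounded through the
  unscaled weights.
\<close>
lemma steinitz_reorder_aux:
  fixes v :: "nat \<Rightarrow> nat \<Rightarrow> real"
  assumes D0: "0 \<le> D"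
  shows "finite A \<Longrightarrow> card A = j \<Longrightarrow> k \<le> j \<Longrightarrow> \<forall>i\<in>A. \<forall>c\<ge>k. v i c = 0 \<Longrightarrow>
    \<forall>i\<in>A. \<forall>c. \<bar>v i c\<bar> \<le> D \<Longrightarrow> fractional_solution v A (real j - real k) l \<Longrightarrow>
    \<exists>xs. distinct xs \<and> set xs = A \<and> (\<forall>L c. \<bar>\<Sum>i\<leftarrow>take L xs. v i c\<bar> \<le> real k * D)"
proof (induction j arbitrary: A l)
  case 0
  then show ?case by (intro exI[of _ "[]"]) auto
next
  case (Suc j)
  show ?case
  proof (cases "Suc j = k")
    case True
    define xs where "xs = sorted_list_of_set A"
    have xs: "distinct xs" "set xs = A" "length xs = k"
      using Suc.prems(1,2) True by (auto simp: xs_def)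
    then have "\<bar>\<Sum>i\<leftarrow>take L xs. v i c\<bar> \<le> real k * D" for L c
      using Suc.prems(5) D0 by (intro abs_sum_list_take_le) auto
    then show ?thesis using xs by blast
  next
    case False
    then have jk: "k \<le> j" using Suc.prems(3) by auto
    define q where "q = (real j - real k) / (real (Suc j) - real k)"
    have "fractional_solution v A ((real (Suc j) - real k) * q) (\<lambda>i. l i * q)"
      using jk by (intro fractional_solution_scale[OF Suc.prems(6)]) (auto simp: q_def)
    then have "fractional_solution v A (real j - real k) (\<lambda>i. l i * q)"
      using jk by (simp add: q_def)
    from exists_solution_small_fractional_part[OF Suc.prems(1,4) this] obtain m where
      m: "fractional_solution v A (real j - real k) m" "card (fractional_part A m) \<le> k + 1" by blast
    from fractional_solution_has_zero[OF Suc.prems(1,2) jk m] obtain i0 where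
      i0: "i0 \<in> A" "m i0 = 0" by blast
    have A': "finite (A - {i0})" "card (A - {i0}) = j" using Suc.prems(1,2) i0 by auto
    from Suc.IH[OF A' jk _ _ fractional_solution_remove[OF m(1) Suc.prems(1) i0(2)]] Suc.prems(4,5)
    obtain xs' where xs': "distinct xs'" "set xs' = A - {i0}"
      "\<forall>L c. \<bar>\<Sum>i\<leftarrow>take L xs'. v i c\<bar> \<le> real k * D" by auto
    have lxs': "length xs' = j" using xs' A' distinct_card by fastforce
    have "\<bar>\<Sum>i\<leftarrow>take L (xs' @ [i0]). v i c\<bar> \<le> real k * D" for L c
    proof (cases "L \<le> j")
      case True
      then show ?thesis using xs'(3) lxs' by simp
    next
      case False
      then have "take L (xs' @ [i0]) = xs' @ [i0]" using lxs' by simp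
      moreover have "distinct (xs' @ [i0])" "set (xs' @ [i0]) = A" using xs' i0 by auto
      ultimately have "(\<Sum>i\<leftarrow>take L (xs' @ [i0]). v i c) = (\<Sum>i\<in>A. v i c)"
        by (metis sum_list_distinct_conv_sum_set)
      then show ?thesis
        using abs_sum_le_of_fractional_solution[OF Suc.prems(1) _ Suc.prems(5)] Suc.prems(2,6)
        by simp
    qed
    then show ?thesis using xs' i0 by (intro exI[of _ "xs' @ [i0]"]) auto
  qed
qed

lemma steinitz_reorder:
  fixes v :: "nat \<Rightarrow> nat \<Rightarrow> real"
  assumes vk: "\<forall>i<m. \<forall>c\<ge>k. v i c = 0" and vD: "\<forall>i<m. \<forall>c. \<bar>v i c\<bar> \<le> D" and D0: "0 \<le> D"
    and s0: "\<forall>c. (\<Sum>i<m. v i c) = 0"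
  shows "\<exists>xs. distinct xs \<and> set xs = {..<m} \<and> (\<forall>L c. \<bar>\<Sum>i\<leftarrow>take L xs. v i c\<bar> \<le> real k * D)"
proof (cases "m < k")
  case True
  have "\<bar>\<Sum>i\<leftarrow>take L [0..<m]. v i c\<bar> \<le> real k * D" for L c
    using vD True D0 by (intro abs_sum_list_take_le) auto
  then show ?thesis by (intro exI[of _ "[0..<m]"]) auto
next
  case False
  define l where "l = (\<lambda>i::nat. (real m - real k) / real m)"
  have "fractional_solution v {..<m} (real m - real k) l"
    unfolding fractional_solution_def
  proof (intro conjI ballI allI)
    show "0 \<le> l i" "l i \<le> 1" for i using False by (auto simp: l_def divide_le_eq_1)
    show "(\<Sum>i<m. l i) = real m - real k" using False by (cases "m = 0") (auto simp: l_def)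
    show "(\<Sum>i<m. l i * v i c) = 0" for c
    proof -
      have "(\<Sum>i<m. l i * v i c) = (real m - real k) / real m * (\<Sum>i<m. v i c)"
        by (simp add: l_def sum_distrib_left)
      then show ?thesis using s0 by simp
    qed
  qed
  then show ?thesis using steinitz_reorder_aux[OF D0, of "{..<m}" m k v] vk vD False by auto
qed

lemma card_le_of_inj_box:
  fixes f :: "'a \<Rightarrow> nat \<Rightarrow> int" and B :: nat
  assumes inj: "inj_on f A" and bnd: "\<forall>a\<in>A. \<forall>c. \<bar>f a c\<bar> \<le> int B"
    and supp: "\<forall>a\<in>A. \<forall>c\<ge>k. f a c = 0"
  shows "card A \<le> (2 * B + 1) ^ k"
proof -
  define box where "box = {ys. set ys \<subseteq> {- int B..int B} \<and> length ys = k}"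
  define g where "g = (\<lambda>a. map (f a) [0..<k])"
  have "inj_on g A"
  proof (rule inj_onI)
    fix a b assume ab: "a \<in> A" "b \<in> A" "g a = g b"
    have "f a c = f b c" for c
      using ab supp nth_map_upt[of c k 0 "f a"] nth_map_upt[of c k 0 "f b"]
      by (cases "c < k") (auto simp: g_def)
    then show "a = b" using inj ab by (auto dest: inj_onD)
  qed
  moreover have "g ` A \<subseteq> box"
  proof -
    have "f a c \<in> {- int B..int B}" if "a \<in> A" for a c
      using bnd[rule_format, OF that, of c] unfolding atLeastAtMost_iff abs_le_iff by linarith
    then show ?thesis by (auto simp: g_def box_def)
  qed
  moreover have "finite box" unfolding box_def by (intro finite_lists_length_eq) auto
  ultimately have "card A \<le> card box" by (metis card_image card_mono)
  also have "card box = (2 * B + 1) ^ k"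
    unfolding box_def by (subst card_lists_length_eq) (auto simp: nat_add_distrib nat_mult_distrib)
  finally show ?thesis .
qed

lemma zero_sum_free_extend:
  fixes w :: "nat \<Rightarrow> 'c \<Rightarrow> 'a::ab_group_add"
  assumes zsf: "\<forall>I \<subseteq> {..<m}. I \<noteq> {} \<longrightarrow> (\<exists>c. (\<Sum>i\<in>I. w i c) \<noteq> 0)"
    and tot: "\<forall>c. (\<Sum>i<Suc m. w i c) = 0"
    and I: "I \<subseteq> {..<Suc m}" "I \<noteq> {}" "I \<noteq> {..<Suc m}"
  shows "\<exists>c. (\<Sum>i\<in>I. w i c) \<noteq> 0"
proof (cases "m \<in> I")
  case False
  then have "I \<subseteq> {..<m}" using I(1) by (auto simp: less_Suc_eq)
  then show ?thesis using zsf I(2) by blast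
next
  case True
  define J where "J = {..<Suc m} - I"
  have "J \<subseteq> {..<m}" "J \<noteq> {}" using True I by (auto simp: J_def less_Suc_eq)
  then obtain c where c: "(\<Sum>i\<in>J. w i c) \<noteq> 0" using zsf by blast
  have "(\<Sum>i\<in>J. w i c) = (\<Sum>i<Suc m. w i c) - (\<Sum>i\<in>I. w i c)"
    unfolding J_def using I(1) by (simp add: sum_diff)
  then show ?thesis using c tot by auto
qed

text \<open>Equal prefix sums would make the segment between them a zero-sum subset.\<close>
lemma prefix_sums_inj:
  fixes w :: "'i \<Rightarrow> 'c \<Rightarrow> 'a::ab_group_add"
  assumes dist: "distinct xs"
    and zsf: "\<forall>I \<subseteq> set xs. I \<noteq> {} \<longrightarrow> I \<noteq> set xs \<longrightarrow> (\<exists>c. (\<Sum>i\<in>I. w i c) \<noteq> 0)"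
  shows "inj_on (\<lambda>L c. \<Sum>i\<in>set (take L xs). w i c) {..<length xs}"
proof -
  define P where "P = (\<lambda>L c. \<Sum>i\<in>set (take L xs). w i c)"
  have False if ab: "a < b" "b < length xs" "P a = P b" for a b
  proof -
    define I where "I = set (drop a (take b xs))"
    have tb: "take b xs = take a xs @ drop a (take b xs)"
      using ab by (metis append_take_drop_id min.absorb1 less_imp_le take_take)
    have "distinct (take b xs)" using dist by simp
    then have dj: "set (take a xs) \<inter> I = {}" unfolding I_def using tb by (metis distinct_append)
    have "P b c = P a c + (\<Sum>i\<in>I. w i c)" for c
      unfolding P_def I_def by (subst tb) (simp add: sum.union_disjoint dj[unfolded I_def])
    then have "\<forall>c. (\<Sum>i\<in>I. w i c) = 0" using ab(3) by (metis add_cancel_left_right)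
    moreover have "I \<subseteq> set xs" by (auto simp: I_def dest: in_set_dropD in_set_takeD)
    moreover have "I \<noteq> {}" using ab by (simp add: I_def)
    moreover have "I \<noteq> set xs"
    proof -
      have "card I = b - a" using dist ab by (simp add: I_def distinct_card)
      moreover have "card (set xs) = length xs" using dist by (rule distinct_card)
      ultimately show ?thesis using ab by auto
    qed
    ultimately show False using zsf by blast
  qed
  then show ?thesis
    unfolding P_def[symmetric] by (intro inj_onI) (metis lessThan_iff linorder_neqE_nat)
qed

lemma steinitz_reorder_int:
  fixes w :: "nat \<Rightarrow> nat \<Rightarrow> int" and D :: nat
  assumes wk: "\<forall>i<m. \<forall>c\<ge>k. w i c = 0" and wD: "\<forall>i<m. \<forall>c. \<bar>w i c\<bar> \<le> int D"
    and tot: "\<forall>c. (\<Sum>i<m. w i c) = 0"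
  shows "\<exists>xs. distinct xs \<and> set xs = {..<m} \<and>
    (\<forall>L c. \<bar>\<Sum>i\<in>set (take L xs). w i c\<bar> \<le> int (k * D))"
proof -
  obtain xs where xs: "distinct xs" "set xs = {..<m}"
    and bd: "\<forall>L c. \<bar>\<Sum>i\<leftarrow>take L xs. real_of_int (w i c)\<bar> \<le> real k * real D"
  proof (rule steinitz_reorder[of _ k "\<lambda>i c. real_of_int (w i c)" "real D", THEN exE])
    show "\<forall>i<m. \<forall>c\<ge>k. real_of_int (w i c) = 0" using wk by simp
    show "\<forall>i<m. \<forall>c. \<bar>real_of_int (w i c)\<bar> \<le> real D"
    proof (intro allI impI)
      fix i c assume "i < m"
      then have "\<bar>w i c\<bar> \<le> int D" using wD by blast
      then show "\<bar>real_of_int (w i c)\<bar> \<le> real D" by simp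
    qed
    show "\<forall>c. (\<Sum>i<m. real_of_int (w i c)) = 0" using tot by (metis of_int_0 of_int_sum)
  qed (use that in auto)
  have "\<bar>\<Sum>i\<in>set (take L xs). w i c\<bar> \<le> int (k * D)" for L c
  proof -
    have "real_of_int (\<Sum>i\<in>set (take L xs). w i c) = (\<Sum>i\<leftarrow>take L xs. real_of_int (w i c))"
      using xs(1) by (simp add: sum_list_distinct_conv_sum_set)
    then show ?thesis using bd by (metis of_int_abs of_int_le_iff of_nat_mult of_int_of_nat_eq)
  qed
  then show ?thesis using xs by blast
qed

text \<open>
  The Steinitz argument: the \<open>m\<close> vectors together with minus their sum can be ordered so that all
  prefix sums lie in a box of side \<open>2kD + 1\<close>, and zero-sum-freeness makes these \<open>m + 1\<close> prefix
  sums distinct.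
\<close>
lemma zero_sum_free_card_le:
  fixes w :: "nat \<Rightarrow> nat \<Rightarrow> int" and k D :: nat
  assumes wk: "\<forall>i<m. \<forall>c\<ge>k. w i c = 0"
    and wD: "\<forall>i<m. \<forall>c. \<bar>w i c\<bar> \<le> int D"
    and sD: "\<forall>c. \<bar>\<Sum>i<m. w i c\<bar> \<le> int D"
    and zsf: "\<forall>I \<subseteq> {..<m}. I \<noteq> {} \<longrightarrow> (\<exists>c. (\<Sum>i\<in>I. w i c) \<noteq> 0)"
  shows "Suc m \<le> (2 * k * D + 1) ^ k"
proof -
  define w' where "w' = (\<lambda>i c. if i < m then w i c else - (\<Sum>j<m. w j c))"
  have w'm: "(\<Sum>i\<in>I. w' i c) = (\<Sum>i\<in>I. w i c)" if "I \<subseteq> {..<m}" for I c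
    using that by (intro sum.cong) (auto simp: w'_def)
  have tot: "\<forall>c. (\<Sum>i<Suc m. w' i c) = 0" by (simp add: w'_def)
  have w'k: "\<forall>i<Suc m. \<forall>c\<ge>k. w' i c = 0" using wk by (simp add: w'_def)
  have "\<forall>i<Suc m. \<forall>c. \<bar>w' i c\<bar> \<le> int D" using wD sD by (auto simp: w'_def)
  from steinitz_reorder_int[OF w'k this tot] obtain xs where xs: "distinct xs" "set xs = {..<Suc m}"
    and bd: "\<forall>L c. \<bar>\<Sum>i\<in>set (take L xs). w' i c\<bar> \<le> int (k * D)" by blast
  have lxs: "length xs = Suc m" using xs distinct_card by fastforce
  define P where "P = (\<lambda>L c. \<Sum>i\<in>set (take L xs). w' i c)"
  have "inj_on P {..<Suc m}"
  proof -
    have "\<forall>I \<subseteq> {..<m}. I \<noteq> {} \<longrightarrow> (\<exists>c. (\<Sum>i\<in>I. w' i c) \<noteq> 0)"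
    proof (intro allI impI)
      fix I :: "nat set" assume "I \<subseteq> {..<m}" "I \<noteq> {}"
      then show "\<exists>c. (\<Sum>i\<in>I. w' i c) \<noteq> 0" using zsf w'm[of I] by simp
    qed
    then have "\<forall>I \<subseteq> set xs. I \<noteq> {} \<longrightarrow> I \<noteq> set xs \<longrightarrow> (\<exists>c. (\<Sum>i\<in>I. w' i c) \<noteq> 0)"
      using zero_sum_free_extend[of m w', OF _ tot] unfolding xs(2) by blast
    from prefix_sums_inj[OF xs(1) this] show ?thesis using lxs by (simp add: P_def)
  qed
  moreover have "\<forall>L\<in>{..<Suc m}. \<forall>c. \<bar>P L c\<bar> \<le> int (k * D)" using bd by (simp add: P_def)
  moreover have "\<forall>L\<in>{..<Suc m}. \<forall>c\<ge>k. P L c = 0"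
    using w'k xs by (auto simp: P_def intro!: sum.neutral dest: in_set_takeD)
  ultimately have "card {..<Suc m} \<le> (2 * (k * D) + 1) ^ k" by (rule card_le_of_inj_box)
  then show ?thesis by (simp add: mult.assoc)
qed

section \<open>Walks, cycles and their effects\<close>

fun path :: "('q, 'x) trans set \<Rightarrow> 'q \<Rightarrow> ('q, 'x) trans list \<Rightarrow> 'q \<Rightarrow> bool" where
  "path D p [] q \<longleftrightarrow> p = q"
| "path D p (t # ws) q \<longleftrightarrow> t \<in> D \<and> src t = p \<and> path D (tgt t) ws q"

lemma path_append: "path D p (a @ b) q \<longleftrightarrow> (\<exists>r. path D p a r \<and> path D r b q)"
  by (induction a arbitrary: p) auto

lemma path_det: "path D p ws q \<Longrightarrow> path D p ws q' \<Longrightarrow> q = q'"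
  by (induction ws arbitrary: p) auto

lemma path_set: "path D p ws q \<Longrightarrow> set ws \<subseteq> D"
  by (induction ws arbitrary: p) auto

lemma path_hd: "path D p ws q \<Longrightarrow> ws \<noteq> [] \<Longrightarrow> src (hd ws) = p"
  by (cases ws) auto

lemma path_last: "path D p ws q \<Longrightarrow> ws \<noteq> [] \<Longrightarrow> tgt (last ws) = q"
  by (induction ws arbitrary: p) (auto split: if_splits)

lemma path_target_in: "path D p ws q \<Longrightarrow> p \<in> Q \<Longrightarrow> \<forall>t\<in>D. tgt t \<in> Q \<Longrightarrow> q \<in> Q"
  by (induction ws arbitrary: p) auto

lemma is_walk_Cons: "is_walk D (t # ws) \<longleftrightarrow> t \<in> D \<and> is_walk D ws \<and> (ws \<noteq> [] \<longrightarrow> tgt t = src (hd ws))"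
proof
  assume a: "is_walk D (t # ws)"
  then have "t \<in> D" "set ws \<subseteq> D" by (auto simp: is_walk_def)
  moreover have "\<forall>i. Suc i < length ws \<longrightarrow> tgt (ws ! i) = src (ws ! Suc i)"
    using a unfolding is_walk_def by (metis Suc_less_eq length_Cons nth_Cons_Suc)
  moreover have "ws \<noteq> [] \<longrightarrow> tgt t = src (hd ws)"
    using a unfolding is_walk_def by (metis hd_conv_nth length_Cons length_greater_0_conv nth_Cons_0 nth_Cons_Suc zero_less_Suc Suc_mono)
  ultimately show "t \<in> D \<and> is_walk D ws \<and> (ws \<noteq> [] \<longrightarrow> tgt t = src (hd ws))"
    by (auto simp: is_walk_def)
next
  assume a: "t \<in> D \<and> is_walk D ws \<and> (ws \<noteq> [] \<longrightarrow> tgt t = src (hd ws))"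
  show "is_walk D (t # ws)" unfolding is_walk_def
  proof (intro conjI allI impI)
    show "set (t # ws) \<subseteq> D" using a by (auto simp: is_walk_def)
    fix i assume i: "Suc i < length (t # ws)"
    show "tgt ((t # ws) ! i) = src ((t # ws) ! Suc i)"
    proof (cases i)
      case 0 then show ?thesis using a i by (cases ws) auto
    next
      case (Suc j) then show ?thesis using a i by (auto simp: is_walk_def)
    qed
  qed
qed

lemma is_walk_path: "ws \<noteq> [] \<Longrightarrow> is_walk D ws \<longleftrightarrow> path D (src (hd ws)) ws (tgt (last ws))"
proof (induction ws)
  case Nil then show ?case by simp
next
  case (Cons t ws)
  show ?case
  proof (cases "ws = []")
    case True then show ?thesis by (simp add: is_walk_def)
  next
    case False
    have "path D (src (hd (t # ws))) (t # ws) (tgt (last (t # ws))) \<longleftrightarrow>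
        t \<in> D \<and> path D (tgt t) ws (tgt (last ws))" using False by simp
    also have "\<dots> \<longleftrightarrow> t \<in> D \<and> tgt t = src (hd ws) \<and> path D (src (hd ws)) ws (tgt (last ws))"
      using False path_hd by fastforce
    finally show ?thesis using Cons False by (auto simp: is_walk_Cons)
  qed
qed

text \<open>
  Effects are taken of multisets of transitions and padded with zeros beyond the \<open>k\<close> counters, so
  that they live in the additive group \<open>nat \<Rightarrow> int\<close>.
\<close>
definition eff :: "nat \<Rightarrow> ('q, 'x) trans multiset \<Rightarrow> nat \<Rightarrow> int" where
  "eff k M = (\<lambda>c. if c < k then (\<Sum>t\<in>#M. upd t ! c) else 0)"

lemma eff_plus: "eff k (M + N) = eff k M + eff k N"
  by (auto simp: eff_def fun_eq_iff)

lemma eff_empty: "eff k {#} = 0"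
  by (auto simp: eff_def fun_eq_iff)

lemma eff_sum_mset: "eff k (\<Sum>c\<in>#C. f c) = (\<Sum>c\<in>#C. eff k (f c))"
  by (induction C) (auto simp: eff_plus eff_empty)

lemma effect_eq_zero_iff: "effect k w = replicate k 0 \<longleftrightarrow> eff k (mset w) = 0"
proof -
  have e: "(\<Sum>t\<leftarrow>w. upd t ! c) = (\<Sum>t\<in>#mset w. upd t ! c)" for c
    by (metis mset_map sum_mset_sum_list)
  show ?thesis
    unfolding effect_def eff_def fun_eq_iff
    by (auto simp: e list_eq_iff_nth_eq)
qed

lemma accepting_iff_path:
  "accepting k q0 D Qf w \<longleftrightarrow> (\<exists>qf\<in>Qf. path D q0 w qf) \<and> eff k (mset w) = 0"
proof (cases "w = []")
  case True then show ?thesis by (auto simp: accepting_def is_walk_def effect_eq_zero_iff)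
next
  case False
  show ?thesis
    unfolding accepting_def effect_eq_zero_iff using False is_walk_path[OF False, of D]
    by (metis path_hd path_last)
qed

lemma walk_input_append: "walk_input (a @ b) = walk_input a @ walk_input b"
  by (simp add: walk_input_def)

definition trans_input :: "('q, 'x) trans \<Rightarrow> 'x list" where
  "trans_input t = (case lbl t of None \<Rightarrow> [] | Some a \<Rightarrow> [a])"

lemma walk_input_simps: "walk_input [] = []" "walk_input (t # ws) = trans_input t @ walk_input ws"
  by (auto simp: walk_input_def trans_input_def)

lemma subseq_walk_input: "subseq a b \<Longrightarrow> subseq (walk_input a) (walk_input b)"
  by (induction rule: list_emb.induct) (simp_all add: walk_input_simps list_emb_append2 list_emb_append_mono)

fun walk_end :: "'q \<Rightarrow> ('q, 'x) trans list \<Rightarrow> 'q" where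
  "walk_end p [] = p"
| "walk_end p (t # ws) = walk_end (tgt t) ws"

lemma path_walk_end: "path D p ws q \<Longrightarrow> walk_end p ws = q"
  by (induction ws arbitrary: p) auto

lemma path_take: "path D p ws q \<Longrightarrow> path D p (take l ws) (walk_end p (take l ws))"
  by (metis append_take_drop_id path_append path_walk_end)

lemma path_drop: "path D p ws q \<Longrightarrow> path D (walk_end p (take l ws)) (drop l ws) q"
  by (metis append_take_drop_id path_append path_walk_end)

definition closed_walk :: "('q, 'x) trans set \<Rightarrow> ('q, 'x) trans list \<Rightarrow> bool" where
  "closed_walk D c \<longleftrightarrow> c \<noteq> [] \<and> path D (src (hd c)) c (src (hd c))"

lemma closed_walkI: "path D p c p \<Longrightarrow> c \<noteq> [] \<Longrightarrow> closed_walk D c"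
  using path_hd by (fastforce simp: closed_walk_def)

lemma path_extract_cycle:
  assumes Q: "finite Q" "card Q = n" "\<forall>t\<in>D. tgt t \<in> Q"
    and w: "path D p w q" and p: "p \<in> Q" and long: "n \<le> length w"
  shows "\<exists>a c b. w = a @ c @ b \<and> closed_walk D c \<and> length c \<le> n \<and> path D p (a @ b) q"
proof -
  define f where "f = (\<lambda>l. walk_end p (take l w))"
  have "f l \<in> Q" for l
    using path_target_in[OF path_take[OF w] p] Q path_set[OF w] by (auto simp: f_def)
  then have "\<not> inj_on f {..n}"
    using card_inj_on_le[of f "{..n}" Q] Q(1,2) by auto
  then obtain i j where ij: "i < j" "j \<le> n" "f i = f j"
    unfolding inj_on_def by (metis atMost_iff linorder_neqE_nat)
  define c where "c = drop i (take j w)"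
  have tj: "take j w = take i w @ c"
    using ij by (metis c_def append_take_drop_id min.absorb1 less_imp_le take_take)
  have wsplit: "w = take i w @ c @ drop j w"
    using tj by (metis append.assoc append_take_drop_id)
  have lenc: "length c = j - i" using ij long by (simp add: c_def)
  have p1: "path D p (take i w) (f i)" using path_take[OF w] by (simp add: f_def)
  have p2: "path D (f j) (drop j w) q" using path_drop[OF w] by (simp add: f_def)
  obtain r where r: "path D p (take i w) r" "path D r c (f j)"
    using path_take[OF w, of j] by (auto simp: tj path_append f_def)
  have "r = f i" using r(1) p1 path_det by metis
  then have "closed_walk D c" using r(2) ij lenc by (intro closed_walkI[of D "f i"]) auto
  moreover have "path D p (take i w @ drop j w) q" using p1 p2 ij by (auto simp: path_append)
  moreover have "length c \<le> n" using lenc ij by simp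
  ultimately have "w = take i w @ c @ drop j w \<and> closed_walk D c \<and> length c \<le> n \<and>
      path D p (take i w @ drop j w) q" using wsplit by simp
  then show ?thesis by blast
qed

abbreviation sum_msets :: "'a list multiset \<Rightarrow> 'a multiset" where
  "sum_msets C \<equiv> \<Sum>c\<in>#C. mset c"

lemma path_cycle_decomposition:
  assumes Q: "finite Q" "card Q = n" "\<forall>t\<in>D. tgt t \<in> Q"
  shows "path D p w q \<Longrightarrow> p \<in> Q \<Longrightarrow> \<exists>\<pi> C. path D p \<pi> q \<and> length \<pi> < n \<and>
     mset w = mset \<pi> + sum_msets C \<and> (\<forall>c\<in>#C. closed_walk D c \<and> length c \<le> n \<and> set c \<subseteq> set w)"
proof (induction "length w" arbitrary: w rule: less_induct)
  case less
  show ?case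
  proof (cases "length w < n")
    case True
    then show ?thesis using less.prems by (intro exI[of _ w] exI[of _ "{#}"]) auto
  next
    case False
    from path_extract_cycle[OF Q less.prems] False obtain a c b where
      acb: "w = a @ c @ b" "closed_walk D c" "length c \<le> n" "path D p (a @ b) q" by auto
    have "length (a @ b) < length w" using acb(1,2) by (auto simp: closed_walk_def)
    from less.hyps[OF this acb(4) less.prems(2)] obtain \<pi> C where
      IH: "path D p \<pi> q" "length \<pi> < n" "mset (a @ b) = mset \<pi> + sum_msets C"
          "\<forall>c\<in>#C. closed_walk D c \<and> length c \<le> n \<and> set c \<subseteq> set (a @ b)" by blast
    have "mset w = mset \<pi> + sum_msets (add_mset c C)" using acb(1) IH(3) by simp
    moreover have "\<forall>c'\<in>#add_mset c C. closed_walk D c' \<and> length c' \<le> n \<and> set c' \<subseteq> set w"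
      using IH(4) acb by auto
    ultimately show ?thesis using IH(1,2) by blast
  qed
qed

lemma zero_sum_free_split:
  fixes g :: "'a \<Rightarrow> 'b::comm_monoid_add"
  shows "\<exists>F L. C = F + L \<and> (\<Sum>c\<in>#F. g c) = 0 \<and> (\<forall>N. N \<subseteq># L \<longrightarrow> N \<noteq> {#} \<longrightarrow> (\<Sum>c\<in>#N. g c) \<noteq> 0)"
proof (induction "size C" arbitrary: C rule: less_induct)
  case less
  show ?case
  proof (cases "\<forall>N. N \<subseteq># C \<longrightarrow> N \<noteq> {#} \<longrightarrow> (\<Sum>c\<in>#N. g c) \<noteq> 0")
    case True then show ?thesis by (intro exI[of _ "{#}"] exI[of _ C]) auto
  next
    case False
    then obtain N where N: "N \<subseteq># C" "N \<noteq> {#}" "(\<Sum>c\<in>#N. g c) = 0" by blast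
    have "size N > 0" using N(2) by (simp add: nonempty_has_size)
    then have "size (C - N) < size C" using N(1) size_Diff_submset[OF N(1)] size_mset_mono[OF N(1)] by simp
    from less.hyps[OF this] obtain F L where
      FL: "C - N = F + L" "(\<Sum>c\<in>#F. g c) = 0" "\<forall>N. N \<subseteq># L \<longrightarrow> N \<noteq> {#} \<longrightarrow> (\<Sum>c\<in>#N. g c) \<noteq> 0" by blast
    have "C = (N + F) + L" using FL(1) N(1) by (metis subset_mset.add_diff_inverse add.assoc)
    moreover have "(\<Sum>c\<in>#N + F. g c) = 0" using N(3) FL(2) by simp
    ultimately show ?thesis using FL(3) by blast
  qed
qed

lemma closed_walk_rotate:
  assumes "closed_walk D g" "t \<in> set g"
  shows "\<exists>r. path D (src t) r (src t) \<and> r \<noteq> [] \<and> hd r = t \<and> mset r = mset g"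
proof -
  obtain a b where g: "g = a @ t # b" using assms(2) by (metis split_list)
  let ?p = "src (hd g)"
  have "path D ?p (a @ t # b) ?p" using assms(1) g by (simp add: closed_walk_def)
  then obtain x where x: "path D ?p a x" "path D x (t # b) ?p" by (auto simp: path_append)
  then have "x = src t" by simp
  then have "path D (src t) ((t # b) @ a) (src t)" using x by (auto simp: path_append)
  then show ?thesis using g by (intro exI[of _ "t # b @ a"]) auto
qed

definition states :: "('q, 'x) trans list \<Rightarrow> 'q set" where
  "states c = src ` set c"

definition state_disjoint :: "('q, 'x) trans list multiset \<Rightarrow> bool" where
  "state_disjoint G \<longleftrightarrow>
     (\<forall>g1 g2. g1 \<in># G \<longrightarrow> g2 \<in># G - {#g1#} \<longrightarrow> states g1 \<inter> states g2 = {})"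

lemma closed_walk_tgt_in_states: "closed_walk D g \<Longrightarrow> t \<in> set g \<Longrightarrow> tgt t \<in> states g"
proof -
  assume a: "closed_walk D g" "t \<in> set g"
  from closed_walk_rotate[OF a] obtain r where r: "path D (src t) r (src t)" "r \<noteq> []" "hd r = t" "mset r = mset g"
    by blast
  then obtain rest where rr: "r = t # rest" by (cases r) auto
  have sr: "set r = set g" using r(4) by (metis set_mset_mset)
  show ?thesis
  proof (cases rest)
    case Nil then show ?thesis using r rr a(2) by (auto simp: states_def)
  next
    case (Cons t' rest')
    then have "tgt t = src t'" using r(1) rr by simp
    moreover have "t' \<in> set g" using sr rr Cons by auto
    ultimately show ?thesis by (auto simp: states_def)
  qed
qed

lemma src_in_states: "t \<in> set g \<Longrightarrow> src t \<in> states g"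
  by (auto simp: states_def)

lemma closed_walk_splice:
  assumes "closed_walk D g1" "closed_walk D g2" "v \<in> states g1" "v \<in> states g2"
  shows "\<exists>g. closed_walk D g \<and> mset g = mset g1 + mset g2"
proof -
  obtain t1 where t1: "t1 \<in> set g1" "src t1 = v" using assms(3) by (auto simp: states_def)
  obtain t2 where t2: "t2 \<in> set g2" "src t2 = v" using assms(4) by (auto simp: states_def)
  obtain r where r: "path D v r v" "mset r = mset g2" using closed_walk_rotate[OF assms(2) t2(1)] t2 by auto
  obtain a b where g: "g1 = a @ t1 # b" using t1(1) by (metis split_list)
  let ?p = "src (hd g1)"
  have "path D ?p (a @ t1 # b) ?p" using assms(1) g by (simp add: closed_walk_def)
  then obtain x where x: "path D ?p a x" "path D x (t1 # b) ?p" by (auto simp: path_append)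
  then have "x = v" using t1 by simp
  then have "path D ?p (a @ r @ t1 # b) ?p" using x r by (auto simp: path_append)
  then have "closed_walk D (a @ r @ t1 # b)" by (rule closed_walkI) simp
  moreover have "mset (a @ r @ t1 # b) = mset g1 + mset g2" using g r by simp
  ultimately show ?thesis by blast
qed

lemma merge_closed_walks:
  "(\<forall>c\<in>#F. closed_walk D c \<and> set c \<subseteq> T) \<Longrightarrow>
   \<exists>G. sum_msets G = sum_msets F \<and> (\<forall>g\<in>#G. closed_walk D g \<and> set g \<subseteq> T) \<and> state_disjoint G"
proof (induction "size F" arbitrary: F rule: less_induct)
  case less
  show ?case
  proof (cases "state_disjoint F")
    case True then show ?thesis using less.prems by blast
  next
    case False
    then obtain g1 g2 v where g: "g1 \<in># F" "g2 \<in># F - {#g1#}" "v \<in> states g1" "v \<in> states g2"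
      unfolding state_disjoint_def by blast
    define R where "R = F - {#g1#} - {#g2#}"
    have F1: "F - {#g1#} = add_mset g2 R" unfolding R_def using insert_DiffM[OF g(2)] by simp
    have "F = add_mset g1 (F - {#g1#})" using g(1) by (simp add: insert_DiffM)
    then have F: "F = R + {#g1#} + {#g2#}" using F1 by simp
    have cl: "closed_walk D g1" "closed_walk D g2" "set g1 \<subseteq> T" "set g2 \<subseteq> T" using less.prems F by auto
    obtain g0 where g0: "closed_walk D g0" "mset g0 = mset g1 + mset g2" using closed_walk_splice[OF cl(1,2) g(3,4)] by blast
    have sg0: "set g0 \<subseteq> T" using cl(3,4) g0(2) by (metis Un_subset_iff set_mset_mset set_mset_union)
    define F' where "F' = R + {#g0#}"
    have "size F' < size F" using F by (simp add: F'_def)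
    moreover have "\<forall>c\<in>#F'. closed_walk D c \<and> set c \<subseteq> T" using less.prems F g0 sg0 by (auto simp: F'_def)
    ultimately obtain G where G: "sum_msets G = sum_msets F'" "\<forall>g\<in>#G. closed_walk D g \<and> set g \<subseteq> T"
      "state_disjoint G" using less.hyps by blast
    have "sum_msets F' = sum_msets F" using F g0 by (simp add: F'_def add.assoc)
    then show ?thesis using G by metis
  qed
qed

section \<open>The ideal read off a walk\<close>

definition covered :: "('q, 'x) trans list multiset \<Rightarrow> ('q, 'x) trans \<Rightarrow> bool" where
  "covered G t \<longleftrightarrow> (\<exists>g\<in>#G. t \<in> set g)"

definition cover :: "('q, 'x) trans list multiset \<Rightarrow> ('q, 'x) trans \<Rightarrow> ('q, 'x) trans list" where
  "cover G t = (SOME g. g \<in># G \<and> t \<in> set g)"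

lemma cover_mem: "covered G t \<Longrightarrow> cover G t \<in># G \<and> t \<in> set (cover G t)"
  unfolding covered_def cover_def by (rule someI_ex) blast

definition letters :: "('q, 'x) trans list \<Rightarrow> 'x set" where
  "letters g = {a. \<exists>t\<in>set g. lbl t = Some a}"

text \<open>
  \<open>prev = Some g\<close> records that the factor emitted last is \<open>(letters g)\<^sup>*\<close>, which then absorbs
  further transitions of \<open>g\<close>.
\<close>
fun walk_ideal ::
  "('q, 'x) trans list multiset \<Rightarrow> ('q, 'x) trans list option \<Rightarrow> ('q, 'x) trans list \<Rightarrow>
   'x factor list" where
  "walk_ideal G prev [] = []"
| "walk_ideal G prev (t # ws) =
    (if covered G t then
       (if prev = Some (cover G t) then walk_ideal G prev ws
        else Star (letters (cover G t)) # walk_ideal G (Some (cover G t)) ws)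
     else Opt (lbl t) # walk_ideal G None ws)"

text \<open>The language of the remaining factors, preceded by the star factor that is still open.\<close>
definition pending :: "('q, 'x) trans list option \<Rightarrow> 'x list set \<Rightarrow> 'x list set" where
  "pending prev A = (case prev of None \<Rightarrow> A | Some g \<Rightarrow> conc (lists (letters g)) A)"

definition flushable :: "('q, 'x) trans list option \<Rightarrow> 'x list \<Rightarrow> bool" where
  "flushable prev v = (case prev of None \<Rightarrow> v = [] | Some g \<Rightarrow> v \<in> lists (letters g))"

lemma concI: "u \<in> A \<Longrightarrow> v \<in> B \<Longrightarrow> u @ v \<in> conc A B"
  by (auto simp: conc_def)

lemma concE: "w \<in> conc A B \<Longrightarrow> \<exists>u v. w = u @ v \<and> u \<in> A \<and> v \<in> B"
  by (auto simp: conc_def)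

lemma trans_input_factor: "trans_input t \<in> factor_lang (Opt (lbl t))"
  by (cases "lbl t") (auto simp: trans_input_def)

lemma trans_input_letters: "t \<in> set g \<Longrightarrow> set (trans_input t) \<subseteq> letters g"
  by (cases "lbl t") (auto simp: trans_input_def letters_def)

lemma pending_intro: "flushable prev v0 \<Longrightarrow> v1 \<in> A \<Longrightarrow> v0 @ v1 \<in> pending prev A"
  by (cases prev) (auto simp: flushable_def pending_def conc_def)

lemma pending_elim: "v \<in> pending prev A \<Longrightarrow> \<exists>v0 v1. v = v0 @ v1 \<and> flushable prev v0 \<and> v1 \<in> A"
  by (cases prev) (auto simp: flushable_def pending_def conc_def)

lemma walk_ideal_complete:
  "flushable prev v \<Longrightarrow> v @ walk_input ws \<in> pending prev (ideal_lang (walk_ideal G prev ws))"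
proof (induction ws arbitrary: prev v)
  case Nil then show ?case using pending_intro[of prev v "[]" "{[]}"] by (simp add: walk_input_simps)
next
  case (Cons t ws)
  show ?case
  proof (cases "covered G t")
    case True
    note gt = cover_mem[OF True]
    show ?thesis
    proof (cases "prev = Some (cover G t)")
      case True
      have "flushable prev (v @ trans_input t)" using Cons.prems True trans_input_letters[OF conjunct2[OF gt]]
        by (auto simp: flushable_def)
      from Cons.IH[OF this] show ?thesis using True \<open>covered G t\<close> by (simp add: walk_input_simps)
    next
      case False
      have "flushable (Some (cover G t)) (trans_input t)" using trans_input_letters[OF conjunct2[OF gt]]
        by (auto simp: flushable_def)
      from Cons.IH[OF \<open>flushable (Some (cover G t)) (trans_input t)\<close>]
      have "trans_input t @ walk_input ws \<in> ideal_lang (Star (letters (cover G t)) # walk_ideal G (Some (cover G t)) ws)"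
        by (simp add: pending_def)
      then show ?thesis using False \<open>covered G t\<close> Cons.prems pending_intro
        by (simp add: walk_input_simps)
    qed
  next
    case False
    have "walk_input ws \<in> ideal_lang (walk_ideal G None ws)" using Cons.IH[of None "[]"]
      by (simp add: flushable_def pending_def)
    then have "trans_input t @ walk_input ws \<in> ideal_lang (Opt (lbl t) # walk_ideal G None ws)"
      using trans_input_factor[of t] by (simp add: concI)
    then show ?thesis using False Cons.prems pending_intro by (simp add: walk_input_simps)
  qed
qed

text \<open>
  Since the cycles of \<open>G\<close> have disjoint state sets, a walk cannot pass from one of them to another
  without an uncovered transition in between; hence every star factor after the first is preceded
  by an optional factor.
\<close>
lemma length_walk_ideal_le:
  assumes disj: "state_disjoint G"
    and clG: "\<forall>g\<in>#G. closed_walk D g"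
  shows "path D p ws q \<Longrightarrow> (\<forall>g. prev = Some g \<longrightarrow> g \<in># G \<and> p \<in> states g) \<Longrightarrow>
    length (walk_ideal G prev ws) \<le> 2 * length (filter (\<lambda>t. \<not> covered G t) ws) + (if prev = None then 1 else 0)"
proof (induction ws arbitrary: p prev)
  case Nil then show ?case by simp
next
  case (Cons t ws)
  have pt: "t \<in> D" "src t = p" "path D (tgt t) ws q" using Cons.prems(1) by auto
  show ?case
  proof (cases "covered G t")
    case True
    note gt = cover_mem[OF True]
    have tg: "tgt t \<in> states (cover G t)" using closed_walk_tgt_in_states[of D "cover G t" t] gt clG by auto
    show ?thesis
    proof (cases "prev = Some (cover G t)")
      case True
      have "length (walk_ideal G prev ws) \<le> 2 * length (filter (\<lambda>t. \<not> covered G t) ws) + (if prev = None then 1 else 0)"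
        using Cons.IH[OF pt(3), of "Some (cover G t)"] True gt tg by auto
      then show ?thesis using True \<open>covered G t\<close> by simp
    next
      case False
      have "prev = None"
      proof (rule ccontr)
        assume "prev \<noteq> None"
        then obtain g where g: "prev = Some g" by auto
        then have "g \<in># G" "p \<in> states g" using Cons.prems(2) by auto
        moreover have "cover G t \<noteq> g" using False g by auto
        then have "cover G t \<in># G - {#g#}" using gt by (simp add: in_diff_count)
        moreover have "p \<in> states (cover G t)" using gt pt(2) src_in_states by metis
        ultimately show False using disj unfolding state_disjoint_def by blast
      qed
      have "length (walk_ideal G (Some (cover G t)) ws) \<le> 2 * length (filter (\<lambda>t. \<not> covered G t) ws)"
        using Cons.IH[OF pt(3), of "Some (cover G t)"] gt tg by auto
      then show ?thesis using False \<open>covered G t\<close> \<open>prev = None\<close> by simp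
    qed
  next
    case False
    have "length (walk_ideal G None ws) \<le> 2 * length (filter (\<lambda>t. \<not> covered G t) ws) + 1"
      using Cons.IH[OF pt(3), of None] by auto
    then show ?thesis using False by simp
  qed
qed

lemma letter_in_walk_input: "t \<in> set ws \<Longrightarrow> lbl t = Some a \<Longrightarrow> a \<in> set (walk_input ws)"
  by (induction ws) (auto simp: walk_input_simps trans_input_def)

lemma closed_walk_pump:
  assumes cl: "closed_walk D g" and p: "p \<in> states g"
  shows "v0 \<in> lists (letters g) \<Longrightarrow> \<exists>c n. path D p c p \<and> mset c = repeat_mset n (mset g) \<and> subseq v0 (walk_input c)"
proof (induction v0)
  case Nil then show ?case by (intro exI[of _ "[]"] exI[of _ 0]) auto
next
  case (Cons a v0)
  then obtain c n where c: "path D p c p" "mset c = repeat_mset n (mset g)" "subseq v0 (walk_input c)" by auto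
  obtain t' where t': "t' \<in> set g" "src t' = p" using p by (auto simp: states_def)
  from closed_walk_rotate[OF cl t'(1)] t' obtain r where r: "path D p r p" "mset r = mset g" by auto
  obtain t where t: "t \<in> set g" "lbl t = Some a" using Cons.prems by (auto simp: letters_def)
  have "t \<in> set r" using t r(2) by (metis set_mset_mset)
  then have "subseq [a] (walk_input r)" using t by (simp add: subseq_singleton_left letter_in_walk_input)
  then have "subseq ([a] @ v0) (walk_input r @ walk_input c)" using c(3) by (rule list_emb_append_mono)
  moreover have "path D p (r @ c) p" using r c by (auto simp: path_append)
  moreover have "mset (r @ c) = repeat_mset (Suc n) (mset g)" using r c by simp
  ultimately show ?case by (intro exI[of _ "r @ c"] exI[of _ "Suc n"]) (simp add: walk_input_append)
qed

lemma flush_pending: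
  assumes clG: "\<forall>g\<in>#G. closed_walk D g"
    and inv: "\<forall>g. prev = Some g \<longrightarrow> g \<in># G \<and> p \<in> states g"
    and fl: "flushable prev v0"
  shows "\<exists>c N. path D p c p \<and> mset c = sum_msets N \<and> set_mset N \<subseteq> set_mset G \<and> subseq v0 (walk_input c)"
proof (cases prev)
  case None then show ?thesis using fl
    by (intro exI[of _ "[]"] exI[of _ "{#}"]) (auto simp: flushable_def)
next
  case (Some g)
  then have g: "g \<in># G" "p \<in> states g" "v0 \<in> lists (letters g)" using inv fl by (auto simp: flushable_def)
  from closed_walk_pump[OF _ g(2) g(3)] clG g(1) obtain c n where
    c: "path D p c p" "mset c = repeat_mset n (mset g)" "subseq v0 (walk_input c)" by blast
  have "sum_msets (replicate_mset n g) = repeat_mset n (mset g)"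
    by (induction n) auto
  then show ?thesis using c g(1) by (intro exI[of _ c] exI[of _ "replicate_mset n g"]) auto
qed

lemma subseq_trans_input_opt: "oo \<in> factor_lang (Opt (lbl t)) \<Longrightarrow> subseq oo (trans_input t)"
  by (cases "lbl t") (auto simp: trans_input_def)

lemma walk_ideal_Cons_elim:
  assumes clG: "\<forall>g\<in>#G. closed_walk D g"
    and v1: "v1 \<in> ideal_lang (walk_ideal G prev (t # ws))"
  shows "\<exists>oo v2 prev'. v1 = oo @ v2 \<and> subseq oo (trans_input t) \<and>
    v2 \<in> pending prev' (ideal_lang (walk_ideal G prev' ws)) \<and>
    (\<forall>g. prev' = Some g \<longrightarrow> g \<in># G \<and> tgt t \<in> states g)"
proof (cases "covered G t")
  case True
  note gt = cover_mem[OF True]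
  have tg: "tgt t \<in> states (cover G t)" using closed_walk_tgt_in_states[of D "cover G t" t] gt clG by auto
  show ?thesis
  proof (cases "prev = Some (cover G t)")
    case True
    have "v1 \<in> ideal_lang (walk_ideal G prev ws)" using v1 True \<open>covered G t\<close> by simp
    then have "[] @ v1 \<in> pending prev (ideal_lang (walk_ideal G prev ws))"
      by (intro pending_intro) (cases prev, auto simp: flushable_def)
    then show ?thesis using True gt tg by (intro exI[of _ "[]"] exI[of _ v1] exI[of _ prev]) auto
  next
    case False
    have "v1 \<in> pending (Some (cover G t)) (ideal_lang (walk_ideal G (Some (cover G t)) ws))"
      using v1 False \<open>covered G t\<close> by (simp add: pending_def)
    then show ?thesis using gt tg
      by (intro exI[of _ "[]"] exI[of _ v1] exI[of _ "Some (cover G t)"]) auto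
  qed
next
  case False
  then have "v1 \<in> conc (factor_lang (Opt (lbl t))) (ideal_lang (walk_ideal G None ws))" using v1 by simp
  then obtain oo v2 where oo: "v1 = oo @ v2" "oo \<in> factor_lang (Opt (lbl t))" "v2 \<in> ideal_lang (walk_ideal G None ws)"
    by (auto dest: concE)
  then show ?thesis using subseq_trans_input_opt[OF oo(2)]
    by (intro exI[of _ oo] exI[of _ v2] exI[of _ None]) (auto simp: pending_def)
qed

lemma walk_ideal_sound:
  assumes clG: "\<forall>g\<in>#G. closed_walk D g"
  shows "path D p ws q \<Longrightarrow> (\<forall>g. prev = Some g \<longrightarrow> g \<in># G \<and> p \<in> states g) \<Longrightarrow>
    v \<in> pending prev (ideal_lang (walk_ideal G prev ws)) \<Longrightarrow>
    \<exists>ws' N. path D p ws' q \<and> mset ws' = mset ws + sum_msets N \<and> set_mset N \<subseteq> set_mset G \<and>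
       subseq v (walk_input ws')"
proof (induction ws arbitrary: p prev v)
  case Nil
  from pending_elim[OF Nil.prems(3)] obtain v0 v1 where v: "v = v0 @ v1" "flushable prev v0" "v1 = []"
    by auto
  from flush_pending[OF clG Nil.prems(2) v(2)] obtain c N where
    c: "path D p c p" "mset c = sum_msets N" "set_mset N \<subseteq> set_mset G" "subseq v0 (walk_input c)" by blast
  then show ?case using Nil.prems(1) v by (intro exI[of _ c] exI[of _ N]) auto
next
  case (Cons t ws)
  have pt: "t \<in> D" "src t = p" "path D (tgt t) ws q" using Cons.prems(1) by auto
  from pending_elim[OF Cons.prems(3)] obtain v0 v1 where
    v: "v = v0 @ v1" "flushable prev v0" "v1 \<in> ideal_lang (walk_ideal G prev (t # ws))" by blast
  from flush_pending[OF clG Cons.prems(2) v(2)] obtain c N0 where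
    c: "path D p c p" "mset c = sum_msets N0" "set_mset N0 \<subseteq> set_mset G" "subseq v0 (walk_input c)" by blast
  from walk_ideal_Cons_elim[OF clG v(3)] obtain oo v2 prev' where oo: "v1 = oo @ v2" "subseq oo (trans_input t)"
    "v2 \<in> pending prev' (ideal_lang (walk_ideal G prev' ws))" "\<forall>g. prev' = Some g \<longrightarrow> g \<in># G \<and> tgt t \<in> states g"
    by blast
  from Cons.IH[OF pt(3) oo(4) oo(3)] obtain ws'' N where
    IH: "path D (tgt t) ws'' q" "mset ws'' = mset ws + sum_msets N" "set_mset N \<subseteq> set_mset G" "subseq v2 (walk_input ws'')"
    by blast
  have "path D p (c @ t # ws'') q" using c(1) pt IH(1) by (auto simp: path_append)
  moreover have "mset (c @ t # ws'') = mset (t # ws) + sum_msets (N0 + N)" using c(2) IH(2)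
    by simp
  moreover have "set_mset (N0 + N) \<subseteq> set_mset G" using c(3) IH(3) by auto
  moreover have "subseq v (walk_input (c @ t # ws''))"
    using v(1) oo(1) c(4) oo(2) IH(4)
    by (simp add: walk_input_append walk_input_simps list_emb_append_mono)
  ultimately show ?case by blast
qed

lemma path_insert_closed:
  assumes "path D p ws q" "t \<in> set ws" "path D (src t) c (src t)"
  shows "\<exists>ws'. path D p ws' q \<and> mset ws' = mset ws + mset c \<and> subseq ws ws'"
proof -
  obtain a b where ab: "ws = a @ t # b" using assms(2) by (metis split_list)
  from assms(1) ab obtain r where r: "path D p a r" "path D r (t # b) q" by (auto simp: path_append)
  then have "r = src t" by simp
  then have "path D p (a @ c @ t # b) q" using r assms(3) by (auto simp: path_append)
  moreover have "subseq ws (a @ c @ t # b)" using ab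
    by (simp add: list_emb_append_mono list_emb_append2)
  ultimately show ?thesis using ab by (intro exI[of _ "a @ c @ t # b"]) auto
qed

lemma path_insert_closed_walks:
  assumes clG: "\<forall>g\<in>#G. closed_walk D g \<and> set g \<subseteq> set w0"
  shows "path D p ws q \<Longrightarrow> set w0 \<subseteq> set ws \<Longrightarrow> set_mset N \<subseteq> set_mset G \<Longrightarrow>
    \<exists>ws'. path D p ws' q \<and> mset ws' = mset ws + sum_msets N \<and> subseq ws ws'"
proof (induction N arbitrary: ws)
  case empty then show ?case by (intro exI[of _ ws]) auto
next
  case (add g N)
  have "\<exists>ws'. path D p ws' q \<and> mset ws' = mset ws + sum_msets N \<and> subseq ws ws'"
    by (rule add.IH) (use add.prems in auto)
  then obtain ws1 where ws1: "path D p ws1 q" "mset ws1 = mset ws + sum_msets N" "subseq ws ws1" by auto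
  have g: "closed_walk D g" "set g \<subseteq> set w0" using add.prems(3) clG by auto
  then have "hd g \<in> set g" by (auto simp: closed_walk_def)
  then have "hd g \<in> set ws" using g(2) add.prems(2) by blast
  moreover have "set ws \<subseteq> set ws1" using ws1(2) by (metis set_mset_mset set_mset_union Un_upper1)
  ultimately have h: "hd g \<in> set ws1" by auto
  from path_insert_closed[OF ws1(1) h] g(1) obtain ws2 where
    ws2: "path D p ws2 q" "mset ws2 = mset ws1 + mset g" "subseq ws1 ws2" by (auto simp: closed_walk_def)
  have "mset ws2 = mset ws + sum_msets (add_mset g N)" using ws2(2) ws1(2) by simp
  moreover have "subseq ws ws2" using ws1(3) ws2(3) by (rule subseq_order.order_trans)
  ultimately show ?case using ws2(1) by blast
qed

section \<open>Counting the factors\<close>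

lemma sum_fun_apply: "(\<Sum>i\<in>I. f i) c = (\<Sum>i\<in>I. f i c)"
  by (induction I rule: infinite_finite_induct) auto

lemma in_sum_msets_iff: "t \<in># sum_msets F \<longleftrightarrow> (\<exists>c\<in>#F. t \<in> set c)"
  by (induction F) auto

lemma sum_msets_repeat_mset: "sum_msets (repeat_mset j A) = repeat_mset j (sum_msets A)"
  by (induction j) auto

lemma size_sum_msets: "size (sum_msets F) = (\<Sum>c\<in>#F. length c)"
  by (induction F) auto

lemma sum_mset_length_le: "\<forall>c\<in>#L. length c \<le> n \<Longrightarrow> (\<Sum>c\<in>#L. length c) \<le> n * size L"
  by (induction L) auto

lemma abs_sum_mset_le:
  fixes f :: "'a \<Rightarrow> int"
  shows "\<forall>t\<in>#M. \<bar>f t\<bar> \<le> 1 \<Longrightarrow> \<bar>\<Sum>t\<in>#M. f t\<bar> \<le> int (size M)"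
proof (induction M)
  case empty then show ?case by simp
next
  case (add x M)
  have "\<bar>\<Sum>t\<in>#add_mset x M. f t\<bar> \<le> \<bar>f x\<bar> + \<bar>\<Sum>t\<in>#M. f t\<bar>" by (simp add: abs_triangle_ineq)
  also have "\<dots> \<le> 1 + int (size M)" using add by (intro add_mono) auto
  finally show ?case by simp
qed

lemma abs_eff_le:
  assumes upd: "\<forall>t\<in>\<Delta>. length (upd t) = k \<and> set (upd t) \<subseteq> {-1, 0, 1}"
    and M: "set_mset M \<subseteq> \<Delta>"
  shows "\<bar>eff k M c\<bar> \<le> int (size M)"
proof (cases "c < k")
  case True
  have "\<forall>t\<in>#M. \<bar>upd t ! c\<bar> \<le> 1"
  proof
    fix t assume "t \<in># M"
    then have "length (upd t) = k" "set (upd t) \<subseteq> {-1, 0, 1}" using upd M by auto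
    then have "upd t ! c \<in> {-1, 0, 1}" using True by (metis nth_mem subsetD)
    then show "\<bar>upd t ! c\<bar> \<le> 1" by auto
  qed
  then show ?thesis using True abs_sum_mset_le by (simp add: eff_def)
qed (simp add: eff_def)

lemma eff_repeat_mset: "eff k (repeat_mset M X) = of_nat M * eff k X"
  by (induction M) (auto simp: eff_plus eff_empty algebra_simps)

lemma sum_nth_mset:
  fixes f :: "'a \<Rightarrow> 'b::comm_monoid_add"
  shows "(\<Sum>i<length xs. f (xs ! i)) = (\<Sum>c\<in>#mset xs. f c)"
proof -
  have "(\<Sum>i<length xs. f (xs ! i)) = sum_list (map f xs)"
    by (simp add: sum_list_sum_nth lessThan_atLeast0)
  also have "\<dots> = (\<Sum>c\<in>#mset xs. f c)" by (metis mset_map sum_mset_sum_list)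
  finally show ?thesis .
qed

lemma sum_mset_nth_subset:
  fixes f :: "'a \<Rightarrow> 'b::comm_monoid_add"
  assumes "I \<subseteq> {..<length xs}"
  shows "image_mset (nth xs) (mset_set I) \<subseteq># mset xs"
    and "(\<Sum>c\<in>#image_mset (nth xs) (mset_set I). f c) = (\<Sum>i\<in>I. f (xs ! i))"
proof -
  have "mset xs = image_mset (nth xs) (mset_set {..<length xs})"
    by (metis map_nth mset_map mset_set_upto_eq_mset_upto)
  moreover have "mset_set I \<subseteq># mset_set {..<length xs}"
    using assms by (intro subset_imp_msubset_mset_set) auto
  ultimately show "image_mset (nth xs) (mset_set I) \<subseteq># mset xs"
    by (metis image_mset_subseteq_mono)
  show "(\<Sum>c\<in>#image_mset (nth xs) (mset_set I). f c) = (\<Sum>i\<in>I. f (xs ! i))"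
    by (simp add: sum_unfold_sum_mset image_mset.compositionality comp_def)
qed

lemma zero_sum_free_indices:
  fixes f :: "'a \<Rightarrow> 'b::comm_monoid_add"
  assumes xs: "mset xs = L"
    and zsf: "\<forall>N. N \<subseteq># L \<longrightarrow> N \<noteq> {#} \<longrightarrow> (\<Sum>c\<in>#N. f c) \<noteq> 0"
    and I: "I \<subseteq> {..<length xs}" "I \<noteq> {}"
  shows "(\<Sum>i\<in>I. f (xs ! i)) \<noteq> 0"
proof -
  define N where "N = image_mset (nth xs) (mset_set I)"
  have "N \<subseteq># L" using sum_mset_nth_subset(1)[OF I(1)] xs by (simp add: N_def)
  moreover have "N \<noteq> {#}" using I by (simp add: N_def finite_subset mset_set_empty_iff)
  ultimately have "(\<Sum>c\<in>#N. f c) \<noteq> 0" using zsf by blast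
  moreover have "(\<Sum>c\<in>#N. f c) = (\<Sum>i\<in>I. f (xs ! i))"
    unfolding N_def by (rule sum_mset_nth_subset(2)[OF I(1)])
  ultimately show ?thesis by simp
qed

lemma zero_sum_free_cycles_le:
  fixes L :: "('q, 'x) trans list multiset"
  assumes upd: "\<forall>t\<in>\<Delta>. length (upd t) = k \<and> set (upd t) \<subseteq> {-1, 0, 1}"
    and Ls: "\<forall>c\<in>#L. set c \<subseteq> \<Delta> \<and> length c \<le> n"
    and zsf: "\<forall>N. N \<subseteq># L \<longrightarrow> N \<noteq> {#} \<longrightarrow> (\<Sum>c\<in>#N. eff k (mset c)) \<noteq> 0"
    and cancel: "(\<Sum>c\<in>#L. eff k (mset c)) = - eff k M" and M: "set_mset M \<subseteq> \<Delta>" "size M \<le> n"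
  shows "Suc (size L) \<le> (2 * k * n + 1) ^ k"
proof -
  have sL: "\<bar>(\<Sum>c'\<in>#L. eff k (mset c')) c\<bar> \<le> int n" for c
    using abs_eff_le[OF upd M(1), of c] M(2) cancel by simp
  obtain xs where xs: "mset xs = L" using ex_mset by blast
  define w where "w = (\<lambda>i. eff k (mset (xs ! i)))"
  have "Suc (length xs) \<le> (2 * k * n + 1) ^ k"
  proof (rule zero_sum_free_card_le)
    show "\<forall>i<length xs. \<forall>c\<ge>k. w i c = 0" by (simp add: w_def eff_def)
    show "\<forall>i<length xs. \<forall>c. \<bar>w i c\<bar> \<le> int n"
    proof (intro allI impI)
      fix i c assume i: "i < length xs"
      then have "xs ! i \<in># L" using xs by (metis nth_mem set_mset_mset)
      then have "set (xs ! i) \<subseteq> \<Delta>" "length (xs ! i) \<le> n" using Ls by auto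
      then have "\<bar>w i c\<bar> \<le> int (size (mset (xs ! i)))" unfolding w_def
        by (intro abs_eff_le[OF upd]) auto
      then show "\<bar>w i c\<bar> \<le> int n" using \<open>length (xs ! i) \<le> n\<close> by simp
    qed
    show "\<forall>c. \<bar>\<Sum>i<length xs. w i c\<bar> \<le> int n"
    proof
      fix c
      have "(\<Sum>i<length xs. w i c) = (\<Sum>i<length xs. w i) c" by (simp add: sum_fun_apply)
      also have "\<dots> = (\<Sum>c'\<in>#L. eff k (mset c')) c" unfolding w_def using sum_nth_mset[of "\<lambda>c. eff k (mset c)" xs] xs
        by simp
      finally show "\<bar>\<Sum>i<length xs. w i c\<bar> \<le> int n" using sL by simp
    qed
    show "\<forall>I\<subseteq>{..<length xs}. I \<noteq> {} \<longrightarrow> (\<exists>c. (\<Sum>i\<in>I. w i c) \<noteq> 0)"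
    proof (intro allI impI)
      fix I assume "I \<subseteq> {..<length xs}" "I \<noteq> {}"
      from zero_sum_free_indices[OF xs zsf this] have "(\<Sum>i\<in>I. w i) \<noteq> 0"
        by (simp add: w_def)
      then obtain c where "(\<Sum>i\<in>I. w i) c \<noteq> 0" by (metis zero_fun_def ext)
      then show "\<exists>c. (\<Sum>i\<in>I. w i c) \<noteq> 0" by (metis sum_fun_apply)
    qed
  qed
  then show ?thesis using xs by auto
qed

lemma ideal_length_bound_le:
  fixes n k :: nat
  assumes "n \<ge> 1"
  shows "2 * n * (2 * k * n + 1) ^ k \<le> (5 * n) ^ (7 * (k + 1)^2)"
proof -
  have k5: "2 * k + 1 \<le> 5 ^ (k + 1)"
  proof (induction k)
    case 0 then show ?case by simp
  next
    case (Suc k) then show ?case by simp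
  qed
  have "n \<le> n ^ (k + 1)" using assms by (simp add: self_le_power)
  have a: "2 * k * n + 1 \<le> (5 * n) ^ (k + 1)"
  proof -
    have "2 * k * n + 1 \<le> (2 * k + 1) * n" using assms by (simp add: algebra_simps)
    also have "\<dots> \<le> 5 ^ (k + 1) * n ^ (k + 1)" using k5 \<open>n \<le> n ^ (k + 1)\<close> by (rule mult_le_mono)
    also have "\<dots> = (5 * n) ^ (k + 1)" by (simp add: power_mult_distrib)
    finally show ?thesis .
  qed
  have b1: "1 \<le> 5 * n" using assms by simp
  have "2 * n * (2 * k * n + 1) ^ k \<le> (5 * n) * ((5 * n) ^ (k + 1)) ^ k"
    using a by (intro mult_le_mono power_mono) auto
  also have "\<dots> = (5 * n) ^ Suc ((k + 1) * k)" by (simp only: power_mult power_Suc)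
  also have "\<dots> \<le> (5 * n) ^ (7 * (k + 1)^2)"
    using b1 by (intro power_increasing) (auto simp: power2_eq_square algebra_simps)
  finally show ?thesis .
qed

section \<open>Ideals covering the downward closure\<close>

lemma set_walk_ideal:
  "f \<in> set (walk_ideal G prev ws) \<Longrightarrow>
    (\<exists>t\<in>set ws. f = Opt (lbl t)) \<or> (\<exists>g\<in>#G. f = Star (letters g))"
  by (induction ws arbitrary: prev) (auto split: if_splits dest: cover_mem)

lemma walk_ideal_expr:
  assumes "\<forall>t\<in>set ws. set_option (lbl t) \<subseteq> X" "\<forall>g\<in>#G. \<forall>t\<in>set g. set_option (lbl t) \<subseteq> X"
  shows "ideal_expr X (walk_ideal G prev ws)"
  unfolding ideal_expr_def
proof
  fix f assume "f \<in> set (walk_ideal G prev ws)"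
  from set_walk_ideal[OF this] consider (opt) t where "t \<in> set ws" "f = Opt (lbl t)"
    | (star) g where "g \<in># G" "f = Star (letters g)" by blast
  then show "factor_over X f"
  proof cases
    case opt then show ?thesis using assms(1) by auto
  next
    case star then show ?thesis using assms(2) by (force simp: letters_def)
  qed
qed

lemma repeat_mset_padding:
  assumes "set_mset N \<subseteq> set_mset G"
  shows "\<exists>K. set_mset K \<subseteq> set_mset G \<and> N + K = repeat_mset (size N) G"
proof -
  have NM: "N \<subseteq># repeat_mset (size N) G"
  proof (rule mset_subset_eqI)
    fix g
    show "count N g \<le> count (repeat_mset (size N) G) g"
    proof (cases "g \<in># N")
      case True
      then have "count G g \<ge> 1" using assms by auto
      moreover have "count N g \<le> size N" by (rule count_le_size)
      ultimately show ?thesis by (simp add: mult_le_mono2[of 1, simplified] order_trans)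
    qed (simp add: not_in_iff)
  qed
  define K where "K = repeat_mset (size N) G - N"
  have "set_mset K \<subseteq> set_mset G"
  proof
    fix x assume "x \<in># K"
    then have "count (repeat_mset (size N) G) x > 0" unfolding K_def
      by (metis count_greater_zero_iff in_diffD)
    then show "x \<in># G" by (simp del: count_greater_zero_iff add: count_greater_zero_iff[symmetric])
  qed
  moreover have "N + K = repeat_mset (size N) G" using NM by (simp add: K_def)
  ultimately show ?thesis by blast
qed

lemma walk_ideal_subset_down_closure:
  assumes qf: "qf \<in> Qf" "path \<Delta> q0 w qf" and eff_w: "eff k (mset w) = 0"
    and G: "\<forall>g\<in>#G. closed_walk \<Delta> g \<and> set g \<subseteq> set w" and eff_G: "eff k (sum_msets G) = 0"
  shows "ideal_lang (walk_ideal G None w) \<subseteq> down_closure (bca_lang k q0 \<Delta> Qf)"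
proof
  fix v assume "v \<in> ideal_lang (walk_ideal G None w)"
  then have "v \<in> pending None (ideal_lang (walk_ideal G None w))" by (simp add: pending_def)
  from walk_ideal_sound[OF _ qf(2) _ this] G obtain ws' N where
    ws': "path \<Delta> q0 ws' qf" "mset ws' = mset w + sum_msets N" "set_mset N \<subseteq> set_mset G"
         "subseq v (walk_input ws')" by auto
  from repeat_mset_padding[OF ws'(3)] obtain K where
    K: "set_mset K \<subseteq> set_mset G" "N + K = repeat_mset (size N) G" by blast
  have "set w \<subseteq> set ws'" using ws'(2) by (metis set_mset_mset set_mset_union Un_upper1)
  with path_insert_closed_walks[OF G ws'(1) _ K(1)] obtain ws'' where
    ws'': "path \<Delta> q0 ws'' qf" "mset ws'' = mset ws' + sum_msets K" "subseq ws' ws''" by blast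
  have "mset ws'' = mset w + sum_msets (N + K)" using ws'(2) ws''(2) by (simp add: add.assoc)
  also have "\<dots> = mset w + repeat_mset (size N) (sum_msets G)"
    unfolding K(2) by (simp add: sum_msets_repeat_mset)
  finally have "eff k (mset ws'') = 0" using eff_w eff_G by (simp add: eff_plus eff_repeat_mset)
  then have "accepting k q0 \<Delta> Qf ws''" using ws''(1) qf(1) by (auto simp: accepting_iff_path)
  moreover have "subseq v (walk_input ws'')"
    using ws'(4) subseq_walk_input[OF ws''(3)] by (rule subseq_order.order_trans)
  ultimately show "v \<in> down_closure (bca_lang k q0 \<Delta> Qf)"
    by (auto simp: down_closure_def bca_lang_def)
qed

lemma length_uncovered_le:
  assumes w: "mset w = mset \<pi> + sum_msets F + sum_msets L"
    and F: "\<forall>t. t \<in># sum_msets F \<longrightarrow> covered G t" and L: "\<forall>c\<in>#L. length c \<le> n"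
  shows "length (filter (\<lambda>t. \<not> covered G t) w) \<le> length \<pi> + n * size L"
proof -
  have "length (filter (\<lambda>t. \<not> covered G t) w) = size (filter_mset (\<lambda>t. \<not> covered G t) (mset w))"
    by (metis mset_filter size_mset)
  also have "filter_mset (\<lambda>t. \<not> covered G t) (mset w) =
      filter_mset (\<lambda>t. \<not> covered G t) (mset \<pi>) + filter_mset (\<lambda>t. \<not> covered G t) (sum_msets L)"
    using F w by (simp add: filter_empty_mset)
  also have "size \<dots> \<le> size (mset \<pi>) + size (sum_msets L)"
    unfolding size_union by (intro add_mono size_filter_mset_lesseq)
  also have "\<dots> = length \<pi> + (\<Sum>c\<in>#L. length c)" by (simp only: size_mset size_sum_msets)
  also have "\<dots> \<le> length \<pi> + n * size L" using L by (simp add: sum_mset_length_le)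
  finally show ?thesis .
qed

lemma accepting_walk_ideal:
  fixes w :: "('q, 'x) trans list"
  assumes bca: "blind_counter_automaton k Q X q0 \<Delta> Qf"
    and nQ: "card Q = n" and acc: "accepting k q0 \<Delta> Qf w"
  shows "\<exists>e. ideal_expr X e \<and> length e \<le> 2 * n * (2 * k * n + 1) ^ k \<and>
    walk_input w \<in> ideal_lang e \<and> ideal_lang e \<subseteq> down_closure (bca_lang k q0 \<Delta> Qf)"
proof -
  note B = bca[unfolded blind_counter_automaton_def]
  from acc obtain qf where qf: "qf \<in> Qf" "path \<Delta> q0 w qf" and eff_w: "eff k (mset w) = 0"
    by (auto simp: accepting_iff_path)
  have updD: "\<forall>t\<in>\<Delta>. length (upd t) = k \<and> set (upd t) \<subseteq> {-1, 0, 1}" using B by auto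
  have sw: "set w \<subseteq> \<Delta>" using path_set[OF qf(2)] .
  from path_cycle_decomposition[OF _ nQ _ qf(2)] B obtain \<pi> C where
    dc: "path \<Delta> q0 \<pi> qf" "length \<pi> < n" "mset w = mset \<pi> + sum_msets C"
        "\<forall>c\<in>#C. closed_walk \<Delta> c \<and> length c \<le> n \<and> set c \<subseteq> set w" by blast
  from zero_sum_free_split[of C "\<lambda>c. eff k (mset c)"] obtain F L where
    FL: "C = F + L" "(\<Sum>c\<in>#F. eff k (mset c)) = 0"
        "\<forall>N. N \<subseteq># L \<longrightarrow> N \<noteq> {#} \<longrightarrow> (\<Sum>c\<in>#N. eff k (mset c)) \<noteq> 0" by blast
  have "\<forall>c\<in>#F. closed_walk \<Delta> c \<and> set c \<subseteq> set w" using dc(4) FL(1) by auto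
  from merge_closed_walks[OF this] obtain G where
    G: "sum_msets G = sum_msets F" "\<forall>g\<in>#G. closed_walk \<Delta> g \<and> set g \<subseteq> set w" "state_disjoint G"
    by blast
  have eff_G: "eff k (sum_msets G) = 0" using G(1) FL(2) by (simp add: eff_sum_mset)
  have L: "\<forall>c\<in>#L. set c \<subseteq> \<Delta> \<and> length c \<le> n"
  proof
    fix c assume "c \<in># L"
    then have "set c \<subseteq> set w" "length c \<le> n" using dc(4) FL(1) by auto
    then show "set c \<subseteq> \<Delta> \<and> length c \<le> n" using sw by (meson order_trans)
  qed
  have "(\<Sum>c\<in>#L. eff k (mset c)) = - eff k (mset \<pi>)"
    using eff_w dc(3) FL(1,2) by (simp add: eff_plus eff_sum_mset add_eq_0_iff)
  from zero_sum_free_cycles_le[OF updD L FL(3) this] path_set[OF dc(1)] dc(2)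
  have size_L: "Suc (size L) \<le> (2 * k * n + 1) ^ k" by simp
  have "\<forall>t. t \<in># sum_msets F \<longrightarrow> covered G t"
    using G(1) by (metis covered_def in_sum_msets_iff)
  with dc(3) FL(1) L have uncovered: "length (filter (\<lambda>t. \<not> covered G t) w) \<le> length \<pi> + n * size L"
    by (intro length_uncovered_le) (auto simp: add.assoc)
  have "length (walk_ideal G None w) \<le> 2 * length (filter (\<lambda>t. \<not> covered G t) w) + 1"
    using length_walk_ideal_le[OF G(3) _ qf(2), of None] G(2) by auto
  also have "\<dots> \<le> 2 * (n * Suc (size L))"
    using uncovered dc(2) by (simp add: mult_Suc_right distrib_left)
  also have "\<dots> \<le> 2 * n * (2 * k * n + 1) ^ k"
    using mult_le_mono2[OF size_L, of "2 * n"] by (simp add: mult.assoc)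
  finally have "length (walk_ideal G None w) \<le> 2 * n * (2 * k * n + 1) ^ k" .
  moreover have "ideal_expr X (walk_ideal G None w)"
  proof (rule walk_ideal_expr)
    have "\<forall>t\<in>\<Delta>. set_option (lbl t) \<subseteq> X" using B by blast
    then show "\<forall>t\<in>set w. set_option (lbl t) \<subseteq> X" "\<forall>g\<in>#G. \<forall>t\<in>set g. set_option (lbl t) \<subseteq> X"
      using sw G(2) by blast+
  qed
  moreover have "walk_input w \<in> ideal_lang (walk_ideal G None w)"
    using walk_ideal_complete[of None "[]" w G] by (simp add: flushable_def pending_def)
  moreover have "ideal_lang (walk_ideal G None w) \<subseteq> down_closure (bca_lang k q0 \<Delta> Qf)"
    using walk_ideal_subset_down_closure[OF qf eff_w G(2) eff_G] .
  ultimately show ?thesis by blast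
qed

lemma factor_lang_subseq_closed: "subseq u v \<Longrightarrow> v \<in> factor_lang f \<Longrightarrow> u \<in> factor_lang f"
proof (cases f)
  case (Star Y)
  assume "subseq u v" "v \<in> factor_lang f"
  then show ?thesis using Star by (auto dest: list_emb_set)
next
  case (Opt a)
  assume a: "subseq u v" "v \<in> factor_lang f"
  show ?thesis
  proof (cases a)
    case None then show ?thesis using a Opt by auto
  next
    case (Some x)
    then have "v = [x] \<or> v = []" using a Opt by auto
    then have "u = [x] \<or> u = []" using a(1)
      by (cases u) (auto simp: subseq_Cons2_iff split: if_splits)
    then show ?thesis using Opt Some by auto
  qed
qed

lemma ideal_lang_subseq_closed: "subseq u v \<Longrightarrow> v \<in> ideal_lang e \<Longrightarrow> u \<in> ideal_lang e"
proof (induction e arbitrary: u v)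
  case Nil then show ?case by auto
next
  case (Cons f fs)
  from Cons.prems(2) obtain a b where ab: "v = a @ b" "a \<in> factor_lang f" "b \<in> ideal_lang fs"
    by (auto dest: concE)
  from Cons.prems(1) ab(1) obtain u1 u2 where u: "u = u1 @ u2" "subseq u1 a" "subseq u2 b"
    by (auto elim: subseq_appendE)
  show ?case
    using u(1) factor_lang_subseq_closed[OF u(2) ab(2)] Cons.IH[OF u(3) ab(3)] by (simp add: concI)
qed

lemma finite_ideal_exprs:
  assumes "finite X"
  shows "finite {e. ideal_expr X e \<and> length e \<le> B}"
proof (rule finite_subset)
  define FX where "FX = Star ` Pow X \<union> Opt ` insert None (Some ` X)"
  have "f \<in> FX" if "factor_over X f" for f
  proof (cases f)
    case (Star Y) then show ?thesis using that by (simp add: FX_def)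
  next
    case (Opt a) then show ?thesis using that by (cases a) (simp_all add: FX_def)
  qed
  then show "{e. ideal_expr X e \<and> length e \<le> B} \<subseteq> {e. set e \<subseteq> FX \<and> length e \<le> B}"
    by (auto simp: ideal_expr_def)
  show "finite {e. set e \<subseteq> FX \<and> length e \<le> B}"
    using assms by (intro finite_lists_length_le) (simp add: FX_def)
qed

lemma down_closure_eq_Union_ideals:
  assumes "\<forall>u \<in> L. \<exists>e\<in>E. u \<in> ideal_lang e" "\<forall>e\<in>E. ideal_lang e \<subseteq> down_closure L"
  shows "down_closure L = (\<Union>e\<in>E. ideal_lang e)"
proof
  show "down_closure L \<subseteq> (\<Union>e\<in>E. ideal_lang e)"
  proof
    fix u assume "u \<in> down_closure L"
    then obtain v where v: "v \<in> L" "subseq u v" by (auto simp: down_closure_def)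
    then obtain e where "e \<in> E" "v \<in> ideal_lang e" using assms(1) by blast
    then show "u \<in> (\<Union>e\<in>E. ideal_lang e)" using ideal_lang_subseq_closed[OF v(2)] by blast
  qed
  show "(\<Union>e\<in>E. ideal_lang e) \<subseteq> down_closure L" using assms(2) by blast
qed

theorem mainTheorem9:
  fixes k n :: nat and Q :: "'q set" and X :: "'x set" and q0 :: 'q
    and \<Delta> :: "('q, 'x) trans set" and Qf :: "'q set"
  assumes "blind_counter_automaton k Q X q0 \<Delta> Qf"
    and "card Q = n" and "n \<ge> 1"
  shows "(\<forall>u \<in> bca_lang k q0 \<Delta> Qf. \<exists>e. ideal_expr X e \<and> length e \<le> (5 * n) ^ (7 * (k + 1)^2) \<and>
            u \<in> ideal_lang e \<and> ideal_lang e \<subseteq> down_closure (bca_lang k q0 \<Delta> Qf))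
       \<and> (\<exists>E. finite E \<and> (\<forall>e\<in>E. ideal_expr X e \<and> length e \<le> (5 * n) ^ (7 * (k + 1)^2)) \<and>
            down_closure (bca_lang k q0 \<Delta> Qf) = (\<Union>e\<in>E. ideal_lang e))"
proof -
  let ?B = "(5 * n) ^ (7 * (k + 1)^2)" and ?L = "bca_lang k q0 \<Delta> Qf"
  define E where "E = {e. ideal_expr X e \<and> length e \<le> ?B \<and> ideal_lang e \<subseteq> down_closure ?L}"
  have cover: "\<forall>u \<in> ?L. \<exists>e\<in>E. u \<in> ideal_lang e"
  proof
    fix u assume "u \<in> ?L"
    then obtain w where w: "u = walk_input w" "accepting k q0 \<Delta> Qf w" by (auto simp: bca_lang_def)
    from accepting_walk_ideal[OF assms(1,2) w(2)] obtain e where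
      e: "ideal_expr X e" "length e \<le> 2 * n * (2 * k * n + 1) ^ k" "walk_input w \<in> ideal_lang e"
         "ideal_lang e \<subseteq> down_closure ?L" by blast
    have "length e \<le> ?B" using e(2) ideal_length_bound_le[OF assms(3), of k] by linarith
    then have "e \<in> E" using e(1,4) by (simp add: E_def)
    then show "\<exists>e\<in>E. u \<in> ideal_lang e" using e(3) w(1) by blast
  qed
  have "finite {e. ideal_expr X e \<and> length e \<le> ?B}"
    using assms(1) by (intro finite_ideal_exprs) (simp add: blind_counter_automaton_def)
  then have "finite E" by (rule rev_finite_subset) (unfold E_def, blast)
  moreover have "\<forall>e\<in>E. ideal_expr X e \<and> length e \<le> ?B \<and> ideal_lang e \<subseteq> down_closure ?L"
    by (simp add: E_def)
  moreover have "down_closure ?L = (\<Union>e\<in>E. ideal_lang e)"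
    using down_closure_eq_Union_ideals[OF cover] calculation(2) by blast
  ultimately show ?thesis using cover by blast
qed

end
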